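(* Let $d,n\ge1$, let $\kappa\ge1$ divide $d$, $d'=d/\kappa$, $r\ge2$, $\mathbf r=(r,\dots,r)\in\mathbb{N}^d$ and $\mathbf r'=(r^\kappa,\dots,r^\kappa)\in\mathbb{N}^{d'}$. Let $A_1,\dots,A_{d'}\in\mathbb{R}^{m\times n^\kappa}$, $\mathcal{A}(\mathcal{Y})=\mathcal{Y}\times_1A_1\times_2\cdots\times_{d'}A_{d'}$, let $A_{2nd}\in\mathbb{R}^{m_{2nd}\times m^{d'}}$ and $\mathcal{A}_{2nd}(\mathcal{X})=A_{2nd}(\mathrm{vect}(\mathcal{A}(\mathcal{R}(\mathcal{X}))))$. Assume each $A_i$ has the RIP$(\varepsilon,\mathcal{S}_{1,2})$ property, where $\delta=12d'r^d\varepsilon<1$, and that the map $\mathcal{Z}\mapsto A_{2nd}\,\mathrm{vect}(\mathcal{Z})$ has the RIP$(\delta/3,\mathcal{B}_{1+\varepsilon,\varepsilon,1-\delta/3,\mathbf r'})$ property, where $\mathcal{B}$ is taken among $d'$-mode tensors in $\mathbb{R}^{m\times\cdots\times m}$. Then for all $\mathcal{X}\in\mathbb{R}^{n\times\cdots\times n}$ ($d$ modes) with HOSVD rank at most $\mathbf r$, $$(1-\delta)\|\mathcal{X}\|^2\le\|\mathcal{A}_{2nd}(\mathcal{X})\|^2\le(1+\delta)\|\mathcal{X}\|^2.$$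
   Context: $\|\cdot\|$ is the Frobenius (resp. Euclidean) norm; $\mathrm{vect}$ is vectorization. The $j$-mode product: $(\mathcal{X}\times_jU)_{i_1,\dots,\ell,\dots,i_D}=\sum_{i_j}\mathcal{X}_{i_1,\dots,i_j,\dots,i_D}U_{\ell,i_j}$. HOSVD rank at most $(r,\dots,r)$ means $\mathcal{X}\in\mathcal{U}_1\otimes\cdots\otimes\mathcal{U}_d$ with subspaces $\mathcal{U}_i\subset\mathbb{R}^n$, $\dim\mathcal{U}_i=r$. $\mathcal{R}$ is the linear reshaping map with $\mathcal{R}(\mathbf{x}^1\circ\cdots\circ\mathbf{x}^d)=\bigcirc_{i=1}^{d'}(\mathbf{x}^{\kappa(i-1)+1}\otimes\cdots\otimes\mathbf{x}^{\kappa i})$ ($\circ$ outer, $\otimes$ Kronecker product). $\mathcal{S}_1=\{\mathbf{u}^1\otimes\cdots\otimes\mathbf{u}^\kappa:\mathbf{u}^i\in\mathbb{S}^{n-1}\}$, $\mathcal{S}_2=\{(\mathbf{x}+\mathbf{y})/\|\mathbf{x}+\mathbf{y}\|_2:\mathbf{x},\mathbf{y}\in\mathcal{S}_1,\langle\mathbf{x},\mathbf{y}\rangle=0\}$, $\mathcal{S}_{1,2}=\mathcal{S}_1\cup\mathcal{S}_2$. A linear map $L$ has RIP$(\varepsilon,\mathcal{S})$ if $(1-\varepsilon)\|s\|^2\le\|L(s)\|^2\le(1+\varepsilon)\|s\|^2$ for all $s\in\mathcal{S}$. For $R\ge0$, $\mu,\theta\ge0$ and $\mathbf s=(s,\dots,s)\in\mathbb{N}^D$,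 the set $\mathcal{B}_{R,\mu,\theta,\mathbf s}$ of nearly orthogonal $D$-mode tensors in $\mathbb{R}^{p\times\cdots\times p}$ consists of those $\mathcal{X}$ that can be written $\mathcal{X}=\sum_{k_1,\dots,k_D=1}^{s}\mathcal{C}(k_1,\dots,k_D)\,\mathbf{u}^1_{k_1}\circ\cdots\circ\mathbf{u}^D_{k_D}$ with $\mathbf{u}^i_k\in\mathbb{R}^p$ such that (a) $\|\mathbf{u}^i_{k}\|_2\le R$ for all $i,k$; (b) $|\langle\mathbf{u}^i_k,\mathbf{u}^i_{k'}\rangle|\le\mu$ for all $i$ and $k\ne k'$; (c) $\|\mathcal{C}\|_F=1$; (d) $\mathcal{C}$ has orthogonal subtensors: for every $i$ and $p'\ne q$, $\sum_{k_j,\,j\ne i}\mathcal{C}(k_1,\dots,p',\dots,k_D)\mathcal{C}(k_1,\dots,q,\dots,k_D)=0$ (with $p',q$ in position $i$); (e) $\|\mathcal{X}\|_F\ge\theta$. *)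

theory Defs
  imports Complex_Main
begin

text \<open>Multi-indices: lists of length D with entries in P. A tensor with D modes whose
  mode index sets are all P is a function on tidx D P (values outside are irrelevant).
  Vectors in R^n are functions on {..<n}; vectors in R^(n^kappa) are indexed by tidx kappa {..<n}
  (Kronecker-product ordering), matrices are functions row => column-index => real.\<close>

definition tidx :: "nat \<Rightarrow> 'a set \<Rightarrow> 'a list set" where
  "tidx D P = {xs. length xs = D \<and> set xs \<subseteq> P}"

definition sqn :: "'a set \<Rightarrow> ('a \<Rightarrow> real) \<Rightarrow> real" where
  "sqn I f = (\<Sum>x\<in>I. (f x)\<^sup>2)"

definition inner_on :: "'a set \<Rightarrow> ('a \<Rightarrow> real) \<Rightarrow> ('a \<Rightarrow> real) \<Rightarrow> real" where
  "inner_on I f g = (\<Sum>x\<in>I. f x * g x)"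

definition lin_apply :: "('r \<Rightarrow> 'c \<Rightarrow> real) \<Rightarrow> 'c set \<Rightarrow> ('c \<Rightarrow> real) \<Rightarrow> 'r \<Rightarrow> real" where
  "lin_apply M C v = (\<lambda>l. \<Sum>c\<in>C. M l c * v c)"

definition rip :: "'a set \<Rightarrow> 'b set \<Rightarrow> (('a \<Rightarrow> real) \<Rightarrow> ('b \<Rightarrow> real)) \<Rightarrow> real \<Rightarrow> ('a \<Rightarrow> real) set \<Rightarrow> bool" where
  "rip I J L eps S \<longleftrightarrow> (\<forall>s\<in>S. (1 - eps) * sqn I s \<le> sqn J (L s) \<and> sqn J (L s) \<le> (1 + eps) * sqn I s)"

definition S1 :: "nat \<Rightarrow> nat \<Rightarrow> (nat list \<Rightarrow> real) set" where
  "S1 \<kappa> n = {(\<lambda>c. \<Prod>j<\<kappa>. u j (c ! j)) | u. \<forall>j<\<kappa>. sqn {..<n} (u j) = 1}"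

definition S2 :: "nat \<Rightarrow> nat \<Rightarrow> (nat list \<Rightarrow> real) set" where
  "S2 \<kappa> n = {(\<lambda>c. (x c + y c) / sqrt (sqn (tidx \<kappa> {..<n}) (\<lambda>c. x c + y c))) | x y.
      x \<in> S1 \<kappa> n \<and> y \<in> S1 \<kappa> n \<and> inner_on (tidx \<kappa> {..<n}) x y = 0}"

definition S12 :: "nat \<Rightarrow> nat \<Rightarrow> (nat list \<Rightarrow> real) set" where
  "S12 \<kappa> n = S1 \<kappa> n \<union> S2 \<kappa> n"

definition nearly_orth :: "nat \<Rightarrow> nat \<Rightarrow> nat \<Rightarrow> real \<Rightarrow> real \<Rightarrow> real \<Rightarrow> (nat list \<Rightarrow> real) set" where
  "nearly_orth D p s R \<mu> \<theta> = {X. \<exists>(C :: nat list \<Rightarrow> real) (u :: nat \<Rightarrow> nat \<Rightarrow> nat \<Rightarrow> real).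
      (\<forall>ls\<in>tidx D {..<p}. X ls = (\<Sum>ks\<in>tidx D {..<s}. C ks * (\<Prod>i<D. u i (ks ! i) (ls ! i)))) \<and>
      (\<forall>i<D. \<forall>k<s. sqrt (sqn {..<p} (u i k)) \<le> R) \<and>
      (\<forall>i<D. \<forall>k<s. \<forall>k'<s. k \<noteq> k' \<longrightarrow> \<bar>inner_on {..<p} (u i k) (u i k')\<bar> \<le> \<mu>) \<and>
      sqrt (sqn (tidx D {..<s}) C) = 1 \<and>
      (\<forall>i<D. \<forall>a<s. \<forall>b<s. a \<noteq> b \<longrightarrow>
          (\<Sum>ks\<in>{ks\<in>tidx D {..<s}. ks ! i = a}. C ks * C (ks[i := b])) = 0) \<and>
      sqrt (sqn (tidx D {..<p}) X) \<ge> \<theta>}"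

text \<open>HOSVD rank at most (r,...,r): X lies in U_1 (x) ... (x) U_d with dim U_i = r,
  i.e. each U_i has a basis b i 0, ..., b i (r-1) of linearly independent vectors in R^n and X
  is a linear combination of the outer products of basis vectors.\<close>
definition hosvd_rank_le :: "nat \<Rightarrow> nat \<Rightarrow> nat \<Rightarrow> (nat list \<Rightarrow> real) \<Rightarrow> bool" where
  "hosvd_rank_le d n r X \<longleftrightarrow> (\<exists>(b :: nat \<Rightarrow> nat \<Rightarrow> nat \<Rightarrow> real) (G :: nat list \<Rightarrow> real).
      (\<forall>i<d. \<forall>c :: nat \<Rightarrow> real. (\<forall>j<n. (\<Sum>k<r. c k * b i k j) = 0) \<longrightarrow> (\<forall>k<r. c k = 0)) \<and>
      (\<forall>is\<in>tidx d {..<n}. X is = (\<Sum>ks\<in>tidx d {..<r}. G ks * (\<Prod>i<d. b i (ks ! i) (is ! i)))))"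

text \<open>Reshaping R: modes grouped in consecutive blocks of kappa; the new mode-i index is the
  multi-index (i_{kappa(i-1)+1},...,i_{kappa i}).\<close>
definition reshape :: "(nat list \<Rightarrow> real) \<Rightarrow> nat list list \<Rightarrow> real" where
  "reshape X = (\<lambda>jss. X (concat jss))"

definition multi_mode_prod :: "nat \<Rightarrow> 'c set \<Rightarrow> (nat \<Rightarrow> nat \<Rightarrow> 'c \<Rightarrow> real) \<Rightarrow> ('c list \<Rightarrow> real) \<Rightarrow> nat list \<Rightarrow> real" where
  "multi_mode_prod D C A Y = (\<lambda>ls. \<Sum>jss\<in>tidx D C. Y jss * (\<Prod>i<D. A i (ls ! i) (jss ! i)))"

definition A2nd :: "nat \<Rightarrow> nat \<Rightarrow> nat \<Rightarrow> nat \<Rightarrow> (nat \<Rightarrow> nat \<Rightarrow> nat list \<Rightarrow> real) \<Rightarrow> (nat \<Rightarrow> nat list \<Rightarrow> real)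
    \<Rightarrow> (nat list \<Rightarrow> real) \<Rightarrow> nat \<Rightarrow> real" where
  "A2nd \<kappa> d' n m A A2 X =
     lin_apply A2 (tidx d' {..<m}) (multi_mode_prod d' (tidx \<kappa> {..<n}) A (reshape X))"

end

(*
  Expand X in orthonormal bases q_t of its mode spaces (Gram-Schmidt):
  X = sum_k G(k) q_1(k_1) o ... o q_d(k_d) with ||G|| = ||X||.  Reshaping turns every
  rank-one term into an outer product of Kronecker products of kappa unit vectors; these lie
  in S_1, and two of them are orthogonal unless they coincide.  The RIP of A_i on S_1, with
  polarisation through S_2, makes the Gram matrix of their images eps-close to the identity,
  so the Gram matrix of the d'-fold products is entrywise within (1 + eps)^d' - 1 <= 2 d' eps
  of the identity on the support of G.  Cauchy-Schwarz over the r^d coefficients then gives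
  | ||A(R(X))||^2 - ||X||^2 | <= delta/6 ||X||^2.

  The tensor Y = A(R(X)) has multilinear rank at most r^kappa.  Its HOSVD (orthonormal factors
  diagonalising the Gram form of each unfolding, obtained by maximising that form on the unit
  sphere) shows Y / ||Y|| to be in B_{1+eps, eps, 1-delta/3, r'}, so the RIP of A_2nd gives
  ||A_2nd(X)||^2 = (1 +- delta/3) ||Y||^2, and (1 +- delta/3)(1 +- delta/6) is within 1 +- delta.
*)
theory Submission
  imports Defs "HOL-Analysis.Function_Topology" "HOL-Analysis.Convex" "Jordan_Normal_Form.Determinant"
begin

section \<open>Squared norms and inner products\<close>

lemma sqn_nonneg: "0 \<le> sqn I f"
  unfolding sqn_def by (simp add: sum_nonneg)

lemma sqn_eq_0D: "finite I \<Longrightarrow> sqn I f = 0 \<Longrightarrow> x \<in> I \<Longrightarrow> f x = 0"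
  unfolding sqn_def using sum_nonneg_eq_0_iff[of I "\<lambda>x. (f x)\<^sup>2"] by auto

lemma sqn_ge_square: "finite I \<Longrightarrow> x \<in> I \<Longrightarrow> (f x)\<^sup>2 \<le> sqn I f"
  unfolding sqn_def by (rule member_le_sum) auto

lemma inner_on_cong:
  "(\<And>x. x \<in> I \<Longrightarrow> f x = f' x) \<Longrightarrow> (\<And>x. x \<in> I \<Longrightarrow> g x = g' x) \<Longrightarrow>
   inner_on I f g = inner_on I f' g'"
  unfolding inner_on_def by (intro sum.cong) auto

lemma inner_on_self: "inner_on I f f = sqn I f"
  unfolding inner_on_def sqn_def by (simp add: power2_eq_square)

lemma inner_on_commute: "inner_on I f g = inner_on I g f"
  unfolding inner_on_def by (simp add: mult.commute)

lemma inner_on_sum_left: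
  "inner_on I (\<lambda>x. \<Sum>k\<in>K. c k * w k x) g = (\<Sum>k\<in>K. c k * inner_on I (w k) g)"
  unfolding inner_on_def by (simp add: sum_distrib_left sum_distrib_right mult.assoc, rule sum.swap)

lemma inner_on_add_left: "inner_on I (\<lambda>t. x t + y t) z = inner_on I x z + inner_on I y z"
  unfolding inner_on_def by (simp add: distrib_right sum.distrib)

lemma inner_on_add_scaled_left:
  "inner_on I (\<lambda>t. x t + c * g t) y = inner_on I x y + c * inner_on I g y"
  unfolding inner_on_def by (simp add: algebra_simps sum.distrib sum_distrib_left)

lemma inner_on_divide_left: "inner_on I (\<lambda>t. x t / c) y = inner_on I x y / c"
  unfolding inner_on_def by (simp add: sum_divide_distrib)

lemma inner_on_indicator_left:
  assumes "t \<in> I" "finite I"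
  shows "inner_on I (\<lambda>u. if u = t then 1 else 0) f = f t"
proof -
  have "inner_on I (\<lambda>u. if u = t then 1 else 0) f = (\<Sum>u\<in>I. if u = t then f u else 0)"
    unfolding inner_on_def by (intro sum.cong) auto
  then show ?thesis using assms by simp
qed

lemma sqn_add_scaled:
  "sqn I (\<lambda>t. x t + c * g t) = sqn I x + 2 * c * inner_on I x g + c\<^sup>2 * sqn I g"
  unfolding sqn_def inner_on_def
  by (simp add: algebra_simps sum.distrib sum_distrib_left power2_eq_square)

lemma sqn_divide: "sqn I (\<lambda>t. x t / c) = sqn I x / c\<^sup>2"
  unfolding sqn_def by (simp add: sum_divide_distrib power_divide)

lemma sqn_normalize: "sqn I f \<noteq> 0 \<Longrightarrow> sqn I (\<lambda>t. f t / sqrt (sqn I f)) = 1"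
  using sqn_nonneg[of I f] by (simp add: sqn_divide)

lemma lin_apply_add_scaled:
  "lin_apply M C (\<lambda>c. x c + k * y c) l = lin_apply M C x l + k * lin_apply M C y l"
  unfolding lin_apply_def by (simp add: algebra_simps sum.distrib sum_distrib_left)

lemma lin_apply_divide: "lin_apply M C (\<lambda>c. x c / k) l = lin_apply M C x l / k"
  unfolding lin_apply_def by (simp add: sum_divide_distrib)

lemma lin_apply_uminus: "lin_apply M C (\<lambda>c. - x c) l = - lin_apply M C x l"
  unfolding lin_apply_def by (simp add: sum_negf)

section \<open>Orthonormal families and Gram--Schmidt\<close>

(* Zero vectors are allowed, so that Gram-Schmidt never needs linear independence. *)
definition orthonormal_or_zero :: "nat \<Rightarrow> nat \<Rightarrow> (nat \<Rightarrow> nat \<Rightarrow> real) \<Rightarrow> bool" where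
  "orthonormal_or_zero p s w \<longleftrightarrow>
     (\<forall>k<s. sqn {..<p} (w k) = 0 \<or> sqn {..<p} (w k) = 1) \<and>
     (\<forall>k<s. \<forall>k'<s. k \<noteq> k' \<longrightarrow> inner_on {..<p} (w k) (w k') = 0)"

definition in_span :: "nat \<Rightarrow> 'k set \<Rightarrow> ('k \<Rightarrow> nat \<Rightarrow> real) \<Rightarrow> (nat \<Rightarrow> real) \<Rightarrow> bool" where
  "in_span p K w f \<longleftrightarrow> (\<exists>c. \<forall>x<p. f x = (\<Sum>k\<in>K. c k * w k x))"

lemma orthonormal_or_zero_inner:
  assumes "orthonormal_or_zero p s w" "k < s" "k' < s"
  shows "inner_on {..<p} (w k) (w k') = (if k = k' then sqn {..<p} (w k) else 0)"
  using assms unfolding orthonormal_or_zero_def by (auto simp: inner_on_self)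

lemma orthonormal_or_zero_sqn_mult:
  assumes "orthonormal_or_zero p s w" "k < s" "x < p"
  shows "sqn {..<p} (w k) * w k x = w k x"
proof -
  have "sqn {..<p} (w k) = 0 \<or> sqn {..<p} (w k) = 1"
    using assms unfolding orthonormal_or_zero_def by auto
  then show ?thesis using sqn_eq_0D[of "{..<p}" "w k" x] assms by auto
qed

lemma orthonormal_or_zero_extend:
  assumes "orthonormal_or_zero p s w" and "sqn {..<p} u = 0 \<or> sqn {..<p} u = 1"
    and "\<forall>k<s. inner_on {..<p} (w k) u = 0"
  shows "orthonormal_or_zero p (Suc s) (w(s := u))"
  using assms unfolding orthonormal_or_zero_def by (auto simp: less_Suc_eq inner_on_commute)

lemma inner_on_lincomb_orthonormal_or_zero:
  assumes "orthonormal_or_zero p s w" "j < s"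
  shows "inner_on {..<p} (\<lambda>x. \<Sum>k<s. c k * w k x) (w j) = c j * sqn {..<p} (w j)"
proof -
  have "inner_on {..<p} (\<lambda>x. \<Sum>k<s. c k * w k x) (w j) = (\<Sum>k<s. c k * inner_on {..<p} (w k) (w j))"
    by (rule inner_on_sum_left)
  also have "\<dots> = (\<Sum>k<s. if k = j then c j * sqn {..<p} (w j) else 0)"
    using orthonormal_or_zero_inner[OF assms(1) _ assms(2)] by (intro sum.cong) auto
  finally show ?thesis using assms(2) by simp
qed

lemma residual_orthogonal:
  assumes w: "orthonormal_or_zero p s w" and j: "j < s"
  shows "inner_on {..<p} (\<lambda>x. f x - (\<Sum>k<s. inner_on {..<p} f (w k) * w k x)) (w j) = 0"
proof -
  have "inner_on {..<p} f (w j) * sqn {..<p} (w j) = inner_on {..<p} f (w j)"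
    unfolding inner_on_def sum_distrib_right
    using orthonormal_or_zero_sqn_mult[OF w j] by (intro sum.cong) (auto simp: mult.assoc)
  then show ?thesis
    using inner_on_lincomb_orthonormal_or_zero[OF w j, of "\<lambda>k. inner_on {..<p} f (w k)"]
    by (simp add: inner_on_def sum_subtractf left_diff_distrib)
qed

lemma in_span_expansion:
  assumes w: "orthonormal_or_zero p s w" and f: "in_span p {..<s} w f" and x: "x < p"
  shows "f x = (\<Sum>k<s. inner_on {..<p} f (w k) * w k x)"
proof -
  obtain c where c: "\<forall>x<p. f x = (\<Sum>k<s. c k * w k x)" using f unfolding in_span_def by auto
  have coeff: "inner_on {..<p} f (w k) = c k * sqn {..<p} (w k)" if "k < s" for k
    using inner_on_lincomb_orthonormal_or_zero[OF w that, of c] c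
    by (metis (no_types, lifting) inner_on_cong lessThan_iff)
  have "(\<Sum>k<s. inner_on {..<p} f (w k) * w k x) = (\<Sum>k<s. c k * (sqn {..<p} (w k) * w k x))"
    using coeff by (intro sum.cong) auto
  also have "\<dots> = (\<Sum>k<s. c k * w k x)"
    using orthonormal_or_zero_sqn_mult[OF w _ x] by (intro sum.cong) auto
  finally show ?thesis using c x by simp
qed

lemma in_span_projection:
  assumes "orthonormal_or_zero p s w" "in_span p {..<s} w f" "x < p"
  shows "(\<Sum>y<p. f y * (\<Sum>k<s. w k y * w k x)) = f x"
proof -
  have "(\<Sum>y<p. f y * (\<Sum>k<s. w k y * w k x)) = (\<Sum>k<s. inner_on {..<p} f (w k) * w k x)"
    unfolding inner_on_def
    by (simp add: sum_distrib_left sum_distrib_right mult.assoc mult.left_commute, rule sum.swap)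
  then show ?thesis using in_span_expansion[OF assms] by simp
qed

lemma in_span_mono:
  assumes f: "in_span p K w f" and sub: "K \<subseteq> K'" and fin: "finite K'" and eq: "\<forall>k\<in>K. w' k = w k"
  shows "in_span p K' w' f"
proof -
  obtain c where c: "\<forall>x<p. f x = (\<Sum>k\<in>K. c k * w k x)" using f unfolding in_span_def by blast
  have "f x = (\<Sum>k\<in>K'. (if k \<in> K then c k else 0) * w' k x)" if "x < p" for x
    using c that eq by (simp add: sum.mono_neutral_cong_left[OF fin sub])
  then show ?thesis unfolding in_span_def by (intro exI[of _ "\<lambda>k. if k \<in> K then c k else 0"]) blast
qed

lemma in_span_trans:
  assumes vq: "\<forall>k\<in>K. in_span p J q (v k)" and f: "in_span p K v f"
  shows "in_span p J q f"
proof -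
  obtain c where c: "\<forall>x<p. f x = (\<Sum>k\<in>K. c k * v k x)" using f unfolding in_span_def by auto
  obtain d where d: "\<forall>k\<in>K. \<forall>x<p. v k x = (\<Sum>j\<in>J. d k j * q j x)"
    using vq unfolding in_span_def by metis
  have "f x = (\<Sum>j\<in>J. (\<Sum>k\<in>K. c k * d k j) * q j x)" if "x < p" for x
  proof -
    have "f x = (\<Sum>k\<in>K. c k * (\<Sum>j\<in>J. d k j * q j x))" using c d that by simp
    also have "\<dots> = (\<Sum>j\<in>J. (\<Sum>k\<in>K. c k * d k j) * q j x)"
      by (simp add: sum_distrib_left sum_distrib_right mult.assoc, rule sum.swap)
    finally show ?thesis .
  qed
  then show ?thesis unfolding in_span_def by (intro exI[of _ "\<lambda>j. \<Sum>k\<in>K. c k * d k j"]) blast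
qed

lemma gram_schmidt_step:
  assumes q: "orthonormal_or_zero p s q"
  shows "\<exists>u. orthonormal_or_zero p (Suc s) (q(s := u)) \<and> in_span p {..<Suc s} (q(s := u)) f"
proof -
  define r where "r = (\<lambda>x. f x - (\<Sum>j<s. inner_on {..<p} f (q j) * q j x))"
  define u where "u = (if sqn {..<p} r = 0 then (\<lambda>_. 0) else (\<lambda>x. r x / sqrt (sqn {..<p} r)))"
  have "orthonormal_or_zero p (Suc s) (q(s := u))"
  proof (rule orthonormal_or_zero_extend[OF q])
    show "sqn {..<p} u = 0 \<or> sqn {..<p} u = 1"
      using sqn_normalize[of "{..<p}" r] by (simp add: u_def sqn_def)
    have "inner_on {..<p} u (q j) = 0" if "j < s" for j
      using residual_orthogonal[OF q that, of f]
      by (simp add: u_def r_def inner_on_divide_left inner_on_def[of _ "\<lambda>_. 0"])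
    then show "\<forall>j<s. inner_on {..<p} (q j) u = 0"
      by (simp add: inner_on_commute[of _ "q _"])
  qed
  moreover have "in_span p {..<Suc s} (q(s := u)) f"
  proof -
    define c where "c = (\<lambda>j. if j < s then inner_on {..<p} f (q j) else sqrt (sqn {..<p} r))"
    have "f x = (\<Sum>j<Suc s. c j * (q(s := u)) j x)" if x: "x < p" for x
    proof -
      have "sqrt (sqn {..<p} r) * u x = r x"
        using sqn_eq_0D[of "{..<p}" r x] x by (auto simp: u_def)
      moreover have "(\<Sum>j<s. c j * (q(s := u)) j x) = (\<Sum>j<s. inner_on {..<p} f (q j) * q j x)"
        by (intro sum.cong) (auto simp: c_def)
      ultimately show ?thesis by (simp add: c_def r_def)
    qed
    then show ?thesis unfolding in_span_def by (intro exI[of _ c]) blast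
  qed
  ultimately show ?thesis by blast
qed

lemma gram_schmidt:
  assumes "finite K"
  shows "\<exists>q. orthonormal_or_zero p (card K) q \<and> (\<forall>k\<in>K. in_span p {..<card K} q (v k))"
  using assms
proof (induction K rule: finite_induct)
  case empty
  then show ?case by (simp add: orthonormal_or_zero_def)
next
  case (insert k0 K)
  obtain q where q: "orthonormal_or_zero p (card K) q"
    and sp: "\<forall>k\<in>K. in_span p {..<card K} q (v k)"
    using insert.IH by blast
  obtain u where q': "orthonormal_or_zero p (Suc (card K)) (q(card K := u))"
    and sp0: "in_span p {..<Suc (card K)} (q(card K := u)) (v k0)"
    using gram_schmidt_step[OF q] by blast
  have "in_span p {..<Suc (card K)} (q(card K := u)) (v k)" if "k \<in> K" for k
    by (rule in_span_mono[of p "{..<card K}" q]) (use sp that in auto)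
  then have "orthonormal_or_zero p (card (insert k0 K)) (q(card K := u)) \<and>
      (\<forall>k\<in>insert k0 K. in_span p {..<card (insert k0 K)} (q(card K := u)) (v k))"
    using q' sp0 insert.hyps by auto
  then show ?case by (rule exI[of _ "q(card K := u)"])
qed

(* The dimension count: a one-sided inverse of a square matrix is two-sided. *)
lemma orthonormal_rows_imp_orthonormal_cols:
  fixes M :: "nat \<Rightarrow> nat \<Rightarrow> real"
  assumes "\<forall>a<s. \<forall>b<s. (\<Sum>j<s. M a j * M b j) = (if a = b then 1 else 0)"
  shows "\<forall>a<s. \<forall>b<s. (\<Sum>j<s. M j a * M j b) = (if a = b then 1 else 0)"
proof (intro allI impI)
  fix a b assume a: "a < s" and b: "b < s"
  define A where "A = mat s s (\<lambda>(i, j). M i j)"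
  have A: "A \<in> carrier_mat s s" and At: "transpose_mat A \<in> carrier_mat s s"
    unfolding A_def by auto
  have "A * transpose_mat A = 1\<^sub>m s"
  proof (rule eq_matI)
    fix i j assume "i < dim_row (1\<^sub>m s :: real mat)" "j < dim_col (1\<^sub>m s :: real mat)"
    then show "(A * transpose_mat A) $$ (i, j) = 1\<^sub>m s $$ (i, j)"
      using assms unfolding A_def by (auto simp: scalar_prod_def atLeast0LessThan)
  qed (auto simp: A_def)
  then have "transpose_mat A * A = 1\<^sub>m s" using mat_mult_left_right_inverse[OF A At] by blast
  moreover have "(\<Sum>j<s. M j a * M j b) = (transpose_mat A * A) $$ (a, b)"
    using a b unfolding A_def by (auto simp: scalar_prod_def atLeast0LessThan)
  ultimately show "(\<Sum>j<s. M j a * M j b) = (if a = b then 1 else 0)" using a b by auto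
qed

lemma orthonormal_in_span_spans:
  assumes q: "orthonormal_or_zero p s q" and w: "orthonormal_or_zero p s w"
    and unit: "\<forall>a<s. sqn {..<p} (w a) = 1" and wq: "\<forall>a<s. in_span p {..<s} q (w a)"
  shows "\<forall>j<s. in_span p {..<s} w (q j)"
proof (intro allI impI)
  fix j assume j: "j < s"
  define C where "C a j = inner_on {..<p} (w a) (q j)" for a j
  have w_exp: "w a t = (\<Sum>j<s. C a j * q j t)" if "a < s" "t < p" for a t
    unfolding C_def using in_span_expansion[OF q] wq that by blast
  have "\<forall>a<s. \<forall>b<s. (\<Sum>j<s. C a j * C b j) = (if a = b then 1 else 0)"
  proof (intro allI impI)
    fix a b assume a: "a < s" and b: "b < s"
    have "inner_on {..<p} (w a) (w b) = inner_on {..<p} (\<lambda>t. \<Sum>j<s. C a j * q j t) (w b)"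
      using w_exp a by (intro inner_on_cong) auto
    also have "\<dots> = (\<Sum>j<s. C a j * C b j)"
      unfolding inner_on_sum_left C_def by (simp add: inner_on_commute)
    finally show "(\<Sum>j<s. C a j * C b j) = (if a = b then 1 else 0)"
      using orthonormal_or_zero_inner[OF w a b] unit a by auto
  qed
  then have CtC: "\<forall>a<s. \<forall>b<s. (\<Sum>i<s. C i a * C i b) = (if a = b then 1 else 0)"
    by (rule orthonormal_rows_imp_orthonormal_cols)
  have "q j t = (\<Sum>a<s. C a j * w a t)" if t: "t < p" for t
  proof -
    have "(\<Sum>a<s. C a j * w a t) = (\<Sum>a<s. C a j * (\<Sum>j'<s. C a j' * q j' t))"
      using w_exp t by (intro sum.cong) auto
    also have "\<dots> = (\<Sum>j'<s. (\<Sum>a<s. C a j * C a j') * q j' t)"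
      by (simp add: sum_distrib_left sum_distrib_right mult_ac, rule sum.swap)
    also have "\<dots> = (\<Sum>j'<s. if j = j' then q j' t else 0)"
      using CtC j by (intro sum.cong) auto
    finally show ?thesis using j by simp
  qed
  then show "in_span p {..<s} w (q j)"
    unfolding in_span_def by (intro exI[of _ "\<lambda>a. C a j"]) blast
qed

section \<open>Diagonalising a Gram form\<close>

definition gram_form ::
    "'l set \<Rightarrow> ('l \<Rightarrow> nat \<Rightarrow> real) \<Rightarrow> nat \<Rightarrow> (nat \<Rightarrow> real) \<Rightarrow> (nat \<Rightarrow> real) \<Rightarrow> real" where
  "gram_form L M p x y = inner_on L (lin_apply M {..<p} x) (lin_apply M {..<p} y)"

lemma gram_form_commute: "gram_form L M p x y = gram_form L M p y x"
  unfolding gram_form_def by (rule inner_on_commute)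

lemma gram_form_eq_inner:
  "gram_form L M p y x = inner_on {..<p} y (\<lambda>t. \<Sum>\<rho>\<in>L. M \<rho> t * lin_apply M {..<p} x \<rho>)"
  unfolding gram_form_def inner_on_def lin_apply_def[of M "{..<p}" y]
  by (simp add: sum_distrib_left sum_distrib_right mult_ac, rule sum.swap)

lemma gram_form_zero_right: "gram_form L M p y (\<lambda>_. 0) = 0"
  by (simp add: gram_form_def lin_apply_def inner_on_def)

lemma gram_form_add_scaled:
  "gram_form L M p (\<lambda>t. x t + c * g t) (\<lambda>t. x t + c * g t) =
   gram_form L M p x x + 2 * c * gram_form L M p x g + c\<^sup>2 * gram_form L M p g g"
proof -
  have "lin_apply M {..<p} (\<lambda>t. x t + c * g t) =
      (\<lambda>\<rho>. lin_apply M {..<p} x \<rho> + c * lin_apply M {..<p} g \<rho>)"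
    by (rule ext, rule lin_apply_add_scaled)
  then show ?thesis unfolding gram_form_def inner_on_self by (simp add: sqn_add_scaled)
qed

lemma gram_form_divide:
  "gram_form L M p (\<lambda>t. x t / c) (\<lambda>t. x t / c) = gram_form L M p x x / c\<^sup>2"
proof -
  have "lin_apply M {..<p} (\<lambda>t. x t / c) = (\<lambda>\<rho>. lin_apply M {..<p} x \<rho> / c)"
    by (rule ext, rule lin_apply_divide)
  then show ?thesis unfolding gram_form_def inner_on_self by (simp add: sqn_divide)
qed

(* The support condition makes this set compact in the product topology. *)
definition unit_orth_compl :: "nat \<Rightarrow> nat \<Rightarrow> (nat \<Rightarrow> nat \<Rightarrow> real) \<Rightarrow> (nat \<Rightarrow> real) set" where
  "unit_orth_compl p k w =
     {x. (\<forall>t\<ge>p. x t = 0) \<and> sqn {..<p} x = 1 \<and> (\<forall>a<k. inner_on {..<p} x (w a) = 0)}"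

lemma continuous_on_coordinate [continuous_intros]: "continuous_on S (\<lambda>x::nat \<Rightarrow> real. x t)"
  by (rule continuous_on_subset[OF continuous_on_product_coordinates]) auto

lemma compact_unit_orth_compl: "compact (unit_orth_compl p k w)"
proof -
  let ?B = "PiE UNIV (\<lambda>t::nat. if t < p then {-1..1::real} else {0})"
  have "compactin (product_topology (\<lambda>_. euclidean) UNIV) ?B"
    unfolding compactin_PiE by simp
  then have "compact ?B" by (simp add: euclidean_product_topology)
  moreover have "closed (unit_orth_compl p k w)"
  proof -
    have "closed {x::nat \<Rightarrow> real. x t = 0}" for t
      by (rule closed_Collect_eq) (intro continuous_intros)+
    moreover have "{x::nat \<Rightarrow> real. \<forall>t\<ge>p. x t = 0} = (\<Inter>t\<in>{p..}. {x. x t = 0})"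
      by auto
    ultimately have "closed {x::nat \<Rightarrow> real. \<forall>t\<ge>p. x t = 0}"
      by (simp add: closed_INT)
    moreover have "closed {x. sqn {..<p} x = 1 \<and> (\<forall>a<k. inner_on {..<p} x (w a) = 0)}"
      unfolding sqn_def inner_on_def
      by (intro closed_Collect_conj closed_Collect_all closed_Collect_imp closed_Collect_eq
          continuous_intros) auto
    ultimately show ?thesis
      unfolding unit_orth_compl_def by (simp add: Collect_conj_eq closed_Int)
  qed
  moreover have "unit_orth_compl p k w \<subseteq> ?B"
  proof
    fix x assume x: "x \<in> unit_orth_compl p k w"
    have "\<bar>x t\<bar> \<le> 1" if "t < p" for t
      using sqn_ge_square[of "{..<p}" t x] x that unfolding unit_orth_compl_def
      by (auto simp: abs_square_le_1)
    then show "x \<in> ?B" using x unfolding unit_orth_compl_def by (auto simp: PiE_iff abs_le_iff)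
  qed
  ultimately show ?thesis by (metis compact_Int_closed inf.absorb2)
qed

lemma gram_form_attains_max:
  assumes "unit_orth_compl p k w \<noteq> {}"
  shows "\<exists>x\<in>unit_orth_compl p k w. \<forall>y\<in>unit_orth_compl p k w.
           gram_form L M p y y \<le> gram_form L M p x x"
proof -
  have "continuous_on (unit_orth_compl p k w) (\<lambda>x. gram_form L M p x x)"
    unfolding gram_form_def inner_on_def lin_apply_def by (intro continuous_intros)
  then show ?thesis using continuous_attains_sup[OF compact_unit_orth_compl assms] by blast
qed

lemma nonpos_if_bounded_by_all_multiples:
  fixes G c :: real
  assumes "\<forall>\<tau>>0. 2 * G \<le> \<tau> * c"
  shows "G \<le> 0"
proof (rule ccontr)
  assume G: "\<not> G \<le> 0"
  define \<tau> where "\<tau> = G / (\<bar>c\<bar> + 1)"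
  have \<tau>: "\<tau> > 0" using G by (simp add: \<tau>_def add_pos_nonneg)
  have "\<tau> * c \<le> \<tau> * \<bar>c\<bar>" using \<tau> by (simp add: mult_left_mono)
  also have "\<dots> < \<tau> * (\<bar>c\<bar> + 1)" using \<tau> by simp
  also have "\<dots> = G" unfolding \<tau>_def by (simp add: add_nonneg_pos)
  finally show False using assms \<tau> G by force
qed

lemma maximizer_second_variation:
  fixes L :: "'l set"
  assumes xU: "x \<in> unit_orth_compl p k w"
    and max: "\<forall>y\<in>unit_orth_compl p k w. gram_form L M p y y \<le> gram_form L M p x x"
    and g0: "\<forall>t\<ge>p. g t = 0" and gx: "inner_on {..<p} g x = 0"
    and gw: "\<forall>a<k. inner_on {..<p} g (w a) = 0"
  shows "2 * \<tau> * gram_form L M p x g + \<tau>\<^sup>2 * gram_form L M p g g \<le>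
         \<tau>\<^sup>2 * gram_form L M p x x * sqn {..<p} g"
proof -
  define xt where "xt = (\<lambda>t. x t + \<tau> * g t)"
  have x0: "\<forall>t\<ge>p. x t = 0" and x1: "sqn {..<p} x = 1"
    and xw: "\<forall>a<k. inner_on {..<p} x (w a) = 0"
    using xU unfolding unit_orth_compl_def by auto
  have sxt: "sqn {..<p} xt = 1 + \<tau>\<^sup>2 * sqn {..<p} g"
    unfolding xt_def sqn_add_scaled using x1 gx by (simp add: inner_on_commute)
  then have sxt0: "sqn {..<p} xt \<noteq> 0"
    using mult_nonneg_nonneg[OF zero_le_power2[of \<tau>] sqn_nonneg[of "{..<p}" g]] by linarith
  have "(\<lambda>t. xt t / sqrt (sqn {..<p} xt)) \<in> unit_orth_compl p k w"
    unfolding unit_orth_compl_def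
  proof (intro CollectI conjI allI impI)
    fix t :: nat assume "p \<le> t"
    then show "xt t / sqrt (sqn {..<p} xt) = 0" using x0 g0 by (simp add: xt_def)
  next
    show "sqn {..<p} (\<lambda>t. xt t / sqrt (sqn {..<p} xt)) = 1" by (rule sqn_normalize[OF sxt0])
  next
    fix a assume "a < k"
    then show "inner_on {..<p} (\<lambda>t. xt t / sqrt (sqn {..<p} xt)) (w a) = 0"
      using xw gw unfolding xt_def by (simp add: inner_on_divide_left inner_on_add_scaled_left)
  qed
  then have "gram_form L M p xt xt / sqn {..<p} xt \<le> gram_form L M p x x"
    using max by (metis gram_form_divide sqn_nonneg real_sqrt_pow2)
  then have "gram_form L M p xt xt \<le> gram_form L M p x x * sqn {..<p} xt"
    using sxt0 sqn_nonneg[of "{..<p}" xt] by (simp add: divide_le_eq)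
  moreover have "gram_form L M p xt xt =
      gram_form L M p x x + 2 * \<tau> * gram_form L M p x g + \<tau>\<^sup>2 * gram_form L M p g g"
    unfolding xt_def by (rule gram_form_add_scaled)
  ultimately show ?thesis using sxt by (simp add: algebra_simps)
qed

(* The residual g = M^T M x - lam x is orthogonal to x and to every w a, so the second
   variation of the maximum in direction g forces g = 0. *)
lemma maximizer_is_eigenvector:
  fixes L :: "'l set"
  assumes xU: "x \<in> unit_orth_compl p k w"
    and max: "\<forall>y\<in>unit_orth_compl p k w. gram_form L M p y y \<le> gram_form L M p x x"
    and perp: "\<forall>a<k. gram_form L M p x (w a) = 0"
  shows "gram_form L M p y x = gram_form L M p x x * inner_on {..<p} y x"
proof -
  define lam where "lam = gram_form L M p x x"
  define z where "z t = (\<Sum>\<rho>\<in>L. M \<rho> t * lin_apply M {..<p} x \<rho>)" for t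
  define g where "g t = (if t < p then z t - lam * x t else 0)" for t
  have x1: "sqn {..<p} x = 1" and xw: "\<forall>a<k. inner_on {..<p} x (w a) = 0"
    using xU unfolding unit_orth_compl_def by auto
  have gram_z: "gram_form L M p v x = inner_on {..<p} v z" for v
    unfolding z_def by (rule gram_form_eq_inner)
  have inner_g: "inner_on {..<p} g v = inner_on {..<p} z v - lam * inner_on {..<p} x v" for v
    unfolding g_def inner_on_def by (simp add: algebra_simps sum_subtractf sum_distrib_left)
  have gw: "inner_on {..<p} g (w a) = 0" if "a < k" for a
    using inner_g[of "w a"] gram_z[of "w a"] perp xw that
    by (simp add: gram_form_commute inner_on_commute)
  have gx: "inner_on {..<p} g x = 0"
    using inner_g[of x] gram_z[of x] x1 by (simp add: inner_on_commute inner_on_self lam_def)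
  have gz: "gram_form L M p x g = sqn {..<p} g"
  proof -
    have "gram_form L M p x g = inner_on {..<p} g (\<lambda>t. g t + lam * x t)"
      unfolding gram_form_commute[of L M p x] gram_z by (rule inner_on_cong) (auto simp: g_def)
    also have "\<dots> = sqn {..<p} g"
      using gx by (simp add: inner_on_commute[of _ g] inner_on_add_scaled_left inner_on_self)
    finally show ?thesis .
  qed
  have "sqn {..<p} g \<le> 0"
  proof (rule nonpos_if_bounded_by_all_multiples, intro allI impI)
    fix \<tau> :: real assume "\<tau> > 0"
    have "\<tau> * (2 * sqn {..<p} g) \<le> \<tau> * (\<tau> * (lam * sqn {..<p} g - gram_form L M p g g))"
      using maximizer_second_variation[OF xU max _ gx, of \<tau>] gw gz
      by (simp add: g_def lam_def algebra_simps power2_eq_square)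
    then show "2 * sqn {..<p} g \<le> \<tau> * (lam * sqn {..<p} g - gram_form L M p g g)"
      using \<open>\<tau> > 0\<close> by simp
  qed
  then have "sqn {..<p} g = 0" using sqn_nonneg[of "{..<p}" g] by linarith
  then have z_eq: "z t = lam * x t" if "t < p" for t
    using sqn_eq_0D[of "{..<p}" g t] that by (simp add: g_def)
  have "gram_form L M p y x = inner_on {..<p} y (\<lambda>t. lam * x t)"
    unfolding gram_z by (rule inner_on_cong) (auto simp: z_eq)
  also have "\<dots> = lam * inner_on {..<p} y x"
    unfolding inner_on_def by (simp add: sum_distrib_left mult_ac)
  finally show ?thesis unfolding lam_def .
qed

lemma exists_unit_orth_not_in_span:
  assumes w: "orthonormal_or_zero p k w" and f: "\<not> in_span p {..<k} w f"
  shows "\<exists>x\<in>unit_orth_compl p k w. 0 < inner_on {..<p} f x"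
proof -
  define c where "c a = inner_on {..<p} f (w a)" for a
  define r where "r t = (if t < p then f t - (\<Sum>a<k. c a * w a t) else 0)" for t
  have r_perp: "inner_on {..<p} r (w a) = 0" if "a < k" for a
  proof -
    have "inner_on {..<p} r (w a) =
        inner_on {..<p} (\<lambda>t. f t - (\<Sum>a<k. inner_on {..<p} f (w a) * w a t)) (w a)"
      by (rule inner_on_cong) (auto simp: r_def c_def)
    then show ?thesis using residual_orthogonal[OF w that] by simp
  qed
  have r_nonzero: "sqn {..<p} r \<noteq> 0"
  proof
    assume "sqn {..<p} r = 0"
    then have "\<forall>t<p. f t = (\<Sum>a<k. c a * w a t)"
      using sqn_eq_0D[of "{..<p}" r] by (auto simp: r_def)
    then show False using f unfolding in_span_def by blast
  qed
  have f_r: "inner_on {..<p} f r = sqn {..<p} r"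
  proof -
    have "inner_on {..<p} f r = inner_on {..<p} (\<lambda>t. r t + (\<Sum>a<k. c a * w a t)) r"
      by (rule inner_on_cong) (auto simp: r_def)
    also have "\<dots> = sqn {..<p} r"
      using r_perp by (simp add: inner_on_add_left inner_on_sum_left inner_on_self inner_on_commute)
    finally show ?thesis .
  qed
  define x where "x = (\<lambda>t. r t / sqrt (sqn {..<p} r))"
  have "x \<in> unit_orth_compl p k w"
    unfolding unit_orth_compl_def
  proof (intro CollectI conjI allI impI)
    fix t :: nat assume "p \<le> t"
    then show "x t = 0" by (simp add: x_def r_def)
  next
    show "sqn {..<p} x = 1" unfolding x_def by (rule sqn_normalize[OF r_nonzero])
  next
    fix a assume "a < k"
    then show "inner_on {..<p} x (w a) = 0" using r_perp by (simp add: x_def inner_on_divide_left)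
  qed
  moreover have "0 < inner_on {..<p} f x"
    using f_r r_nonzero sqn_nonneg[of "{..<p}" r]
    by (simp add: x_def inner_on_commute[of _ f] inner_on_divide_left real_div_sqrt)
  ultimately show ?thesis by blast
qed

lemma exists_new_eigenvector:
  fixes L :: "'l set"
  assumes L: "finite L" and w: "orthonormal_or_zero p k w"
    and eig: "\<forall>a<k. \<forall>y. gram_form L M p y (w a) = lam a * inner_on {..<p} y (w a)"
    and \<rho>0: "\<rho>0 \<in> L" and not_spanned: "\<not> in_span p {..<k} w (M \<rho>0)"
  shows "\<exists>x. sqn {..<p} x = 1 \<and> (\<forall>a<k. inner_on {..<p} (w a) x = 0) \<and> 0 < gram_form L M p x x \<and>
           (\<forall>y. gram_form L M p y x = gram_form L M p x x * inner_on {..<p} y x)"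
proof -
  obtain x0 where x0U: "x0 \<in> unit_orth_compl p k w" and pos0: "0 < inner_on {..<p} (M \<rho>0) x0"
    using exists_unit_orth_not_in_span[OF w not_spanned] by blast
  have "lin_apply M {..<p} x0 \<rho>0 = inner_on {..<p} (M \<rho>0) x0"
    by (simp add: lin_apply_def inner_on_def)
  then have "0 < (lin_apply M {..<p} x0 \<rho>0)\<^sup>2" using pos0 by simp
  moreover have "(lin_apply M {..<p} x0 \<rho>0)\<^sup>2 \<le> gram_form L M p x0 x0"
    using sqn_ge_square[OF L \<rho>0] by (simp add: gram_form_def inner_on_self)
  ultimately have "0 < gram_form L M p x0 x0" by linarith
  obtain x where xU: "x \<in> unit_orth_compl p k w"
    and max: "\<forall>y\<in>unit_orth_compl p k w. gram_form L M p y y \<le> gram_form L M p x x"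
    using gram_form_attains_max[of p k w L M] x0U by blast
  have pos: "0 < gram_form L M p x x" using max x0U \<open>0 < gram_form L M p x0 x0\<close> by fastforce
  have "\<forall>a<k. gram_form L M p x (w a) = 0"
    using eig xU unfolding unit_orth_compl_def by auto
  then have "\<forall>y. gram_form L M p y x = gram_form L M p x x * inner_on {..<p} y x"
    using maximizer_is_eigenvector[OF xU max] by blast
  moreover have "sqn {..<p} x = 1" "\<forall>a<k. inner_on {..<p} (w a) x = 0"
    using xU unfolding unit_orth_compl_def by (auto simp: inner_on_commute)
  ultimately show ?thesis using pos by blast
qed

lemma eigen_family_extend:
  assumes w: "orthonormal_or_zero p k w"
    and eig: "\<forall>a<k. \<forall>y. gram_form L M p y (w a) = lam a * inner_on {..<p} y (w a)"
    and u: "sqn {..<p} u = 0 \<or> sqn {..<p} u = 1" and uw: "\<forall>a<k. inner_on {..<p} (w a) u = 0"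
    and eigu: "\<forall>y. gram_form L M p y u = \<mu> * inner_on {..<p} y u"
  shows "orthonormal_or_zero p (Suc k) (w(k := u)) \<and>
    (\<forall>a<Suc k. \<forall>y. gram_form L M p y ((w(k := u)) a) = (lam(k := \<mu>)) a * inner_on {..<p} y ((w(k := u)) a))"
proof
  show "orthonormal_or_zero p (Suc k) (w(k := u))"
    by (rule orthonormal_or_zero_extend[OF w u uw])
  show "\<forall>a<Suc k. \<forall>y. gram_form L M p y ((w(k := u)) a) = (lam(k := \<mu>)) a * inner_on {..<p} y ((w(k := u)) a)"
  proof (intro allI impI)
    fix a y assume "a < Suc k"
    then consider "a = k" | "a < k" by linarith
    then show "gram_form L M p y ((w(k := u)) a) = (lam(k := \<mu>)) a * inner_on {..<p} y ((w(k := u)) a)"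
    proof cases
      case 1
      then show ?thesis by (simp only: fun_upd_same) (rule eigu[rule_format])
    next
      case 2
      then show ?thesis using eig by simp
    qed
  qed
qed

(* Either the rows of M are already spanned and the family is padded with zero vectors, or a
   maximiser on the orthogonal complement is a new eigenvector with positive eigenvalue. *)
lemma eigenvectors_exist:
  fixes L :: "'l set"
  assumes L: "finite L"
  shows "\<exists>w lam. orthonormal_or_zero p k w \<and>
     (\<forall>a<k. \<forall>y. gram_form L M p y (w a) = lam a * inner_on {..<p} y (w a)) \<and>
     ((\<forall>\<rho>\<in>L. in_span p {..<k} w (M \<rho>)) \<or> (\<forall>a<k. sqn {..<p} (w a) = 1 \<and> 0 < lam a))"
proof (induction k)
  case 0
  show ?case
    by (intro exI[of _ "\<lambda>_ _. 0"] exI[of _ "\<lambda>_. 0"]) (simp add: orthonormal_or_zero_def)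
next
  case (Suc k)
  then obtain w lam where w: "orthonormal_or_zero p k w"
    and eig: "\<forall>a<k. \<forall>y. gram_form L M p y (w a) = lam a * inner_on {..<p} y (w a)"
    and alt: "(\<forall>\<rho>\<in>L. in_span p {..<k} w (M \<rho>)) \<or> (\<forall>a<k. sqn {..<p} (w a) = 1 \<and> 0 < lam a)"
    by blast
  show ?case
  proof (cases "\<forall>\<rho>\<in>L. in_span p {..<k} w (M \<rho>)")
    case True
    have "in_span p {..<Suc k} (w(k := (\<lambda>_. 0))) (M \<rho>)" if "\<rho> \<in> L" for \<rho>
      by (rule in_span_mono[of p "{..<k}" w]) (use True that in auto)
    moreover have eig0: "\<forall>y. gram_form L M p y (\<lambda>_. 0) = 0 * inner_on {..<p} y (\<lambda>_. 0)"
      by (simp add: gram_form_zero_right)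
    have "orthonormal_or_zero p (Suc k) (w(k := (\<lambda>_. 0))) \<and>
      (\<forall>a<Suc k. \<forall>y. gram_form L M p y ((w(k := (\<lambda>_. 0))) a) =
         (lam(k := 0)) a * inner_on {..<p} y ((w(k := (\<lambda>_. 0))) a))"
      by (rule eigen_family_extend[OF w eig _ _ eig0]) (simp_all add: sqn_def inner_on_def)
    ultimately show ?thesis
      by (intro exI[of _ "w(k := (\<lambda>_. 0))"] exI[of _ "lam(k := 0)"]) blast
  next
    case False
    then obtain \<rho>0 where "\<rho>0 \<in> L" "\<not> in_span p {..<k} w (M \<rho>0)" by blast
    then obtain x where x1: "sqn {..<p} x = 1" and xw: "\<forall>a<k. inner_on {..<p} (w a) x = 0"
      and pos: "0 < gram_form L M p x x"
      and eigx: "\<forall>y. gram_form L M p y x = gram_form L M p x x * inner_on {..<p} y x"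
      using exists_new_eigenvector[OF L w eig] by blast
    have "\<forall>a<Suc k. sqn {..<p} ((w(k := x)) a) = 1 \<and> 0 < (lam(k := gram_form L M p x x)) a"
      using alt False x1 pos by (auto simp: less_Suc_eq)
    moreover have "orthonormal_or_zero p (Suc k) (w(k := x)) \<and>
      (\<forall>a<Suc k. \<forall>y. gram_form L M p y ((w(k := x)) a) =
         (lam(k := gram_form L M p x x)) a * inner_on {..<p} y ((w(k := x)) a))"
      using x1 by (intro eigen_family_extend[OF w eig _ xw eigx]) simp
    ultimately show ?thesis
      by (intro exI[of _ "w(k := x)"] exI[of _ "lam(k := gram_form L M p x x)"]) blast
  qed
qed

lemma eigenvector_in_row_span:
  assumes eig: "\<forall>y. gram_form L M p y x = lam * inner_on {..<p} y x" and lam: "lam \<noteq> 0"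
  shows "in_span p L M x"
proof -
  have "x t = (\<Sum>\<rho>\<in>L. (lin_apply M {..<p} x \<rho> / lam) * M \<rho> t)" if t: "t < p" for t
  proof -
    have "lam * x t = (\<Sum>\<rho>\<in>L. M \<rho> t * lin_apply M {..<p} x \<rho>)"
      using eig[rule_format, of "\<lambda>u. if u = t then 1 else 0"] t
      by (simp add: gram_form_eq_inner inner_on_indicator_left)
    then have "x t = (\<Sum>\<rho>\<in>L. M \<rho> t * lin_apply M {..<p} x \<rho>) / lam"
      using lam by (metis nonzero_mult_div_cancel_left)
    then show ?thesis by (simp add: sum_divide_distrib mult.commute)
  qed
  then show ?thesis
    unfolding in_span_def by (intro exI[of _ "\<lambda>\<rho>. lin_apply M {..<p} x \<rho> / lam"]) blast
qed

(* If the rows are not spanned after card K steps, all eigenvalues are positive, so the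
   eigenvectors lie in the row space; that space is spanned by the card K vectors q, hence by the
   card K orthonormal eigenvectors. *)
lemma diagonalizing_basis:
  fixes L :: "'l set" and v :: "'k \<Rightarrow> nat \<Rightarrow> real"
  assumes L: "finite L" and K: "finite K" and rows: "\<forall>\<rho>\<in>L. in_span p K v (M \<rho>)"
  shows "\<exists>w. orthonormal_or_zero p (card K) w \<and> (\<forall>\<rho>\<in>L. in_span p {..<card K} w (M \<rho>)) \<and>
           (\<forall>a<card K. \<forall>b<card K. a \<noteq> b \<longrightarrow> gram_form L M p (w a) (w b) = 0)"
proof -
  define s where "s = card K"
  obtain q where q: "orthonormal_or_zero p s q" and vq: "\<forall>k\<in>K. in_span p {..<s} q (v k)"
    using gram_schmidt[OF K] unfolding s_def by blast
  have rows_q: "\<forall>\<rho>\<in>L. in_span p {..<s} q (M \<rho>)"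
    using rows in_span_trans[OF vq] by blast
  obtain w lam where w: "orthonormal_or_zero p s w"
    and eig: "\<forall>a<s. \<forall>y. gram_form L M p y (w a) = lam a * inner_on {..<p} y (w a)"
    and alt: "(\<forall>\<rho>\<in>L. in_span p {..<s} w (M \<rho>)) \<or> (\<forall>a<s. sqn {..<p} (w a) = 1 \<and> 0 < lam a)"
    using eigenvectors_exist[OF L] by blast
  have diag: "gram_form L M p (w a) (w b) = 0" if "a < s" "b < s" "a \<noteq> b" for a b
    using eig orthonormal_or_zero_inner[OF w] that by simp
  have "\<forall>\<rho>\<in>L. in_span p {..<s} w (M \<rho>)"
  proof (cases "\<forall>\<rho>\<in>L. in_span p {..<s} w (M \<rho>)")
    case False
    then have unit: "\<forall>a<s. sqn {..<p} (w a) = 1 \<and> 0 < lam a" using alt by blast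
    have "in_span p {..<s} q (w a)" if "a < s" for a
    proof (rule in_span_trans[OF rows_q])
      show "in_span p L M (w a)"
        using eigenvector_in_row_span[of L M p "w a" "lam a"] eig unit that by auto
    qed
    then have "\<forall>j\<in>{..<s}. in_span p {..<s} w (q j)"
      using orthonormal_in_span_spans[OF q w] unit by blast
    then show ?thesis using rows_q in_span_trans by blast
  qed
  then show ?thesis using w diag unfolding s_def by (intro exI[of _ w]) blast
qed

section \<open>Multi-indices\<close>

lemma finite_tidx: "finite P \<Longrightarrow> finite (tidx D P)"
  unfolding tidx_def using finite_lists_length_eq[of P D] by (simp add: conj_commute)

lemma card_tidx: "finite P \<Longrightarrow> card (tidx D P) = card P ^ D"
  unfolding tidx_def using card_lists_length_eq[of P D] by (simp add: conj_commute)

lemma tidx_iff_nth: "l \<in> tidx D P \<longleftrightarrow> length l = D \<and> (\<forall>i<D. l ! i \<in> P)"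
  unfolding tidx_def by (auto simp: set_conv_nth)

lemma length_tidx: "l \<in> tidx D P \<Longrightarrow> length l = D"
  unfolding tidx_def by simp

lemma tidx_update: "l \<in> tidx D P \<Longrightarrow> y \<in> P \<Longrightarrow> l[i := y] \<in> tidx D P"
  unfolding tidx_def using set_update_subset_insert[of l i y] by auto

lemma tidx_eq_iff_nth:
  assumes "l \<in> tidx D P" "l' \<in> tidx D P'"
  shows "l' = l \<longleftrightarrow> (\<forall>i<D. l' ! i = l ! i)"
  using assms length_tidx[OF assms(1)] length_tidx[OF assms(2)] by (auto intro: nth_equalityI)

lemma tidx_Suc: "tidx (Suc D) P = (\<lambda>(xs, x). xs @ [x]) ` (tidx D P \<times> P)"
proof (intro equalityI subsetI)
  fix l assume "l \<in> tidx (Suc D) P"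
  then have l: "length l = Suc D" "set l \<subseteq> P" unfolding tidx_def by auto
  then have "l = butlast l @ [last l]" by (metis append_butlast_last_id length_0_conv nat.distinct(1))
  moreover have "butlast l \<in> tidx D P" using l unfolding tidx_def
    by (auto dest: in_set_butlastD)
  moreover have "last l \<in> P" using l by (metis last_in_set length_0_conv nat.distinct(1) subsetD)
  ultimately show "l \<in> (\<lambda>(xs, x). xs @ [x]) ` (tidx D P \<times> P)" by force
next
  fix l assume "l \<in> (\<lambda>(xs, x). xs @ [x]) ` (tidx D P \<times> P)"
  then show "l \<in> tidx (Suc D) P" unfolding tidx_def by auto
qed

lemma sum_prod_tidx:
  fixes f :: "nat \<Rightarrow> 'a \<Rightarrow> real"
  assumes "finite P"
  shows "(\<Sum>c\<in>tidx D P. \<Prod>j<D. f j (c ! j)) = (\<Prod>j<D. \<Sum>x\<in>P. f j x)"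
proof (induction D)
  case 0
  have "tidx 0 P = {[]}" unfolding tidx_def by auto
  then show ?case by simp
next
  case (Suc D)
  have inj: "inj_on (\<lambda>(xs, x). xs @ [x]) (tidx D P \<times> P)"
    by (auto simp: inj_on_def)
  have "(\<Sum>c\<in>tidx (Suc D) P. \<Prod>j<Suc D. f j (c ! j)) =
        (\<Sum>(xs, x)\<in>tidx D P \<times> P. \<Prod>j<Suc D. f j ((xs @ [x]) ! j))"
    unfolding tidx_Suc by (subst sum.reindex[OF inj]) (simp add: case_prod_unfold)
  also have "\<dots> = (\<Sum>(xs, x)\<in>tidx D P \<times> P. (\<Prod>j<D. f j (xs ! j)) * f D x)"
  proof (intro sum.cong refl, clarify)
    fix xs x assume xs: "xs \<in> tidx D P"
    then have len: "length xs = D" unfolding tidx_def by auto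
    have "(\<Prod>j<Suc D. f j ((xs @ [x]) ! j)) = (\<Prod>j<D. f j ((xs @ [x]) ! j)) * f D x"
      using len by (simp add: nth_append)
    also have "(\<Prod>j<D. f j ((xs @ [x]) ! j)) = (\<Prod>j<D. f j (xs ! j))"
      using len by (intro prod.cong) (auto simp: nth_append)
    finally show "(\<Prod>j<Suc D. f j ((xs @ [x]) ! j)) = (\<Prod>j<D. f j (xs ! j)) * f D x" .
  qed
  also have "\<dots> = (\<Sum>xs\<in>tidx D P. \<Prod>j<D. f j (xs ! j)) * (\<Sum>x\<in>P. f D x)"
    by (simp add: sum.cartesian_product[symmetric] sum_product)
  also have "\<dots> = (\<Prod>j<Suc D. \<Sum>x\<in>P. f j x)" using Suc by simp
  finally show ?case .
qed

lemma sum_tidx_split_nth: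
  assumes P: "finite P" and i: "i < D" and c0: "c0 \<in> P"
  shows "(\<Sum>l\<in>tidx D P. F l) = (\<Sum>l0\<in>{l\<in>tidx D P. l ! i = c0}. \<Sum>y\<in>P. F (l0[i := y]))"
proof -
  let ?Z = "{l\<in>tidx D P. l ! i = c0}"
  have len: "length l = D" if "l \<in> tidx D P" for l using that unfolding tidx_def by auto
  have bij: "bij_betw (\<lambda>(l0, y). l0[i := y]) (?Z \<times> P) (tidx D P)"
  proof (rule bij_betwI[where g = "\<lambda>l. (l[i := c0], l ! i)"])
    show "(\<lambda>(l0, y). l0[i := y]) \<in> ?Z \<times> P \<rightarrow> tidx D P"
      by (auto intro: tidx_update)
    show "(\<lambda>l. (l[i := c0], l ! i)) \<in> tidx D P \<rightarrow> ?Z \<times> P"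
    proof
      fix l assume l: "l \<in> tidx D P"
      have "l[i := c0] \<in> tidx D P" using tidx_update[OF l c0] .
      moreover have "l ! i \<in> P" using l i unfolding tidx_iff_nth by auto
      moreover have "l[i := c0] ! i = c0" using len[OF l] i by simp
      ultimately show "(l[i := c0], l ! i) \<in> ?Z \<times> P" by simp
    qed
    show "(\<lambda>l. (l[i := c0], l ! i)) ((\<lambda>(l0, y). l0[i := y]) x) = x" if "x \<in> ?Z \<times> P" for x
      using that i len by (auto simp: list_update_same_conv)
    show "(\<lambda>(l0, y). l0[i := y]) ((\<lambda>l. (l[i := c0], l ! i)) y) = y" if "y \<in> tidx D P" for y
      using that i len by auto
  qed
  have "(\<Sum>l\<in>tidx D P. F l) = (\<Sum>x\<in>?Z \<times> P. F ((\<lambda>(l0, y). l0[i := y]) x))"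
    using sum.reindex_bij_betw[OF bij, of F] by simp
  also have "\<dots> = (\<Sum>l0\<in>?Z. \<Sum>y\<in>P. F (l0[i := y]))"
    by (simp add: sum.cartesian_product case_prod_unfold)
  finally show ?thesis .
qed

lemma prod_indicator:
  "(\<Prod>i<(D::nat). if P i then (1::real) else 0) = (if \<forall>i<D. P i then 1 else 0)"
  by (induction D) (auto simp: less_Suc_eq)

lemma sum_tidx_delta:
  fixes T :: "'a list \<Rightarrow> real"
  assumes fin: "finite P" and l: "l \<in> tidx D P"
  shows "(\<Sum>l'\<in>tidx D P. T l' * (\<Prod>i<D. if l' ! i = l ! i then 1 else 0)) = T l"
proof -
  have "(\<Sum>l'\<in>tidx D P. T l' * (\<Prod>i<D. if l' ! i = l ! i then 1 else 0)) =
        (\<Sum>l'\<in>tidx D P. if l' = l then T l' else 0)"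
  proof (intro sum.cong refl)
    fix l' assume l': "l' \<in> tidx D P"
    have e: "(\<Prod>i<D. if l' ! i = l ! i then 1 else (0::real)) = (if l' = l then 1 else 0)"
      unfolding prod_indicator using tidx_eq_iff_nth[OF l l'] by simp
    show "T l' * (\<Prod>i<D. if l' ! i = l ! i then 1 else 0) = (if l' = l then T l' else 0)" unfolding e by simp
  qed
  also have "\<dots> = T l" using l finite_tidx[OF fin] by simp
  finally show ?thesis .
qed

lemma sum_squares_eq_delta_form:
  fixes g :: "'a list \<Rightarrow> real"
  assumes "finite P"
  shows "(\<Sum>ks\<in>tidx D P. (g ks)\<^sup>2) =
    (\<Sum>ks\<in>tidx D P. \<Sum>ks'\<in>tidx D P. g ks * g ks' * (\<Prod>i<D. if ks' ! i = ks ! i then 1 else 0))"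
proof (rule sum.cong[OF refl])
  fix ks assume "ks \<in> tidx D P"
  then have "(\<Sum>ks'\<in>tidx D P. g ks' * (\<Prod>i<D. if ks' ! i = ks ! i then 1 else 0)) = g ks"
    by (rule sum_tidx_delta[OF assms])
  then show "(g ks)\<^sup>2 = (\<Sum>ks'\<in>tidx D P. g ks * g ks' * (\<Prod>i<D. if ks' ! i = ks ! i then 1 else 0))"
    by (simp add: power2_eq_square mult.assoc flip: sum_distrib_left)
qed

section \<open>Orthonormal expansions and the HOSVD\<close>

lemma prod_lessThan_remove:
  assumes "i < (D::nat)"
  shows "(\<Prod>k<D. g k) = g i * (\<Prod>k\<in>{..<D} - {i}. g k)"
  using assms prod.remove[of "{..<D}" i g] by simp

lemma sum_mode_kernel_eval:
  fixes T :: "nat list \<Rightarrow> real" and S :: "nat \<Rightarrow> nat \<Rightarrow> real"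
  assumes P: "finite P" and i: "i < D" and tg: "tg \<in> P"
    and act: "\<forall>l\<in>tidx D P. (\<Sum>y\<in>P. T (l[i := y]) * S i y) = T (l[i := tg])"
  shows "(\<Sum>l\<in>tidx D P. T l * (\<Prod>k<D. S k (l ! k))) =
         (\<Sum>l\<in>tidx D P. T l * (\<Prod>k<D. (S(i := (\<lambda>y. if y = tg then 1 else 0))) k (l ! k)))"
proof -
  let ?Z = "{l\<in>tidx D P. l ! i = tg}"
  let ?S' = "S(i := (\<lambda>y. if y = tg then 1 else 0))"
  have len: "length l = D" if "l \<in> tidx D P" for l using that unfolding tidx_def by auto
  have rest: "(\<Prod>k\<in>{..<D} - {i}. G k ((l0[i := y]) ! k)) = (\<Prod>k\<in>{..<D} - {i}. G k (l0 ! k))"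
    for G l0 y by (intro prod.cong) auto
  have inner: "(\<Sum>y\<in>P. T (l0[i := y]) * (\<Prod>k<D. G k ((l0[i := y]) ! k))) =
        (\<Prod>k\<in>{..<D} - {i}. G k (l0 ! k)) * (\<Sum>y\<in>P. T (l0[i := y]) * G i y)"
    if l0: "l0 \<in> tidx D P" for l0 and G :: "nat \<Rightarrow> nat \<Rightarrow> real"
  proof -
    have "(\<Sum>y\<in>P. T (l0[i := y]) * (\<Prod>k<D. G k ((l0[i := y]) ! k))) =
          (\<Sum>y\<in>P. T (l0[i := y]) * (G i y * (\<Prod>k\<in>{..<D} - {i}. G k (l0 ! k))))"
      using i len[OF l0] by (intro sum.cong refl) (simp add: prod_lessThan_remove[OF i] rest)
    then show ?thesis by (simp add: sum_distrib_right sum_distrib_left mult_ac)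
  qed
  have "(\<Sum>l\<in>tidx D P. T l * (\<Prod>k<D. S k (l ! k))) =
        (\<Sum>l0\<in>?Z. (\<Prod>k\<in>{..<D} - {i}. S k (l0 ! k)) * (\<Sum>y\<in>P. T (l0[i := y]) * S i y))"
    by (subst sum_tidx_split_nth[OF P i tg]) (intro sum.cong refl, rule inner, simp)
  also have "\<dots> = (\<Sum>l0\<in>?Z. (\<Prod>k\<in>{..<D} - {i}. ?S' k (l0 ! k)) * (\<Sum>y\<in>P. T (l0[i := y]) * ?S' i y))"
  proof (intro sum.cong refl)
    fix l0 assume l0: "l0 \<in> ?Z"
    have "(\<Sum>y\<in>P. T (l0[i := y]) * ?S' i y) = (\<Sum>y\<in>P. if y = tg then T (l0[i := y]) else 0)"
      by (intro sum.cong) auto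
    also have "\<dots> = T (l0[i := tg])" using P tg by (simp add: sum.delta')
    finally have "(\<Sum>y\<in>P. T (l0[i := y]) * ?S' i y) = (\<Sum>y\<in>P. T (l0[i := y]) * S i y)"
      using act l0 by auto
    moreover have "(\<Prod>k\<in>{..<D} - {i}. ?S' k (l0 ! k)) = (\<Prod>k\<in>{..<D} - {i}. S k (l0 ! k))"
      by (intro prod.cong) auto
    ultimately show "(\<Prod>k\<in>{..<D} - {i}. S k (l0 ! k)) * (\<Sum>y\<in>P. T (l0[i := y]) * S i y) =
        (\<Prod>k\<in>{..<D} - {i}. ?S' k (l0 ! k)) * (\<Sum>y\<in>P. T (l0[i := y]) * ?S' i y)" by simp
  qed
  also have "\<dots> = (\<Sum>l\<in>tidx D P. T l * (\<Prod>k<D. ?S' k (l ! k)))"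
    by (subst sum_tidx_split_nth[OF P i tg]) (intro sum.cong refl, rule inner[symmetric], simp)
  finally show ?thesis .
qed

(* Kernels that act on T like evaluation at tg k are replaced, one mode at a time, by
   Kronecker deltas. *)
lemma sum_mode_kernels_eval:
  fixes T :: "nat list \<Rightarrow> real" and Q R :: "nat \<Rightarrow> nat \<Rightarrow> real" and tg :: "nat \<Rightarrow> nat"
  assumes P: "finite P" and J: "J \<subseteq> {..<D}" and tgP: "\<forall>i\<in>J. tg i \<in> P"
    and act: "\<forall>i\<in>J. \<forall>l\<in>tidx D P. (\<Sum>y\<in>P. T (l[i := y]) * Q i y) = T (l[i := tg i])"
  shows "(\<Sum>l\<in>tidx D P. T l * (\<Prod>k<D. if k \<in> J then Q k (l ! k) else R k (l ! k))) =
         (\<Sum>l\<in>tidx D P. T l * (\<Prod>k<D. if k \<in> J then (if l ! k = tg k then 1 else 0) else R k (l ! k)))"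
proof -
  have fin: "finite J" using J finite_subset by blast
  show ?thesis using fin J tgP act
  proof (induction J arbitrary: R rule: finite_induct)
    case empty
    then show ?case by simp
  next
    case (insert i J)
    define R' where "R' = R(i := Q i)"
    define S0 where "S0 = (\<lambda>k y. if k \<in> J then (if y = tg k then 1 else 0) else R' k y)"
    have iD: "i < D" using insert by auto
    have "(\<Sum>l\<in>tidx D P. T l * (\<Prod>k<D. if k \<in> insert i J then Q k (l ! k) else R k (l ! k))) =
          (\<Sum>l\<in>tidx D P. T l * (\<Prod>k<D. if k \<in> J then Q k (l ! k) else R' k (l ! k)))"
      unfolding R'_def by (intro sum.cong refl arg_cong2[where f = "(*)"] prod.cong) auto
    also have "\<dots> = (\<Sum>l\<in>tidx D P. T l * (\<Prod>k<D. if k \<in> J then (if l ! k = tg k then 1 else 0) else R' k (l ! k)))"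
      using insert by (intro insert.IH) auto
    also have "\<dots> = (\<Sum>l\<in>tidx D P. T l * (\<Prod>k<D. S0 k (l ! k)))"
      unfolding S0_def by simp
    also have "\<dots> = (\<Sum>l\<in>tidx D P. T l * (\<Prod>k<D. (S0(i := (\<lambda>y. if y = tg i then 1 else 0))) k (l ! k)))"
      by (rule sum_mode_kernel_eval[OF P iD]) (use insert in \<open>auto simp: R'_def S0_def\<close>)
    also have "\<dots> = (\<Sum>l\<in>tidx D P. T l * (\<Prod>k<D. if k \<in> insert i J then (if l ! k = tg k then 1 else 0) else R k (l ! k)))"
      unfolding R'_def S0_def by (intro sum.cong refl arg_cong2[where f = "(*)"] prod.cong) auto
    finally show ?case .
  qed
qed

definition fibers_in_span ::
    "nat \<Rightarrow> nat \<Rightarrow> 'k set \<Rightarrow> (nat \<Rightarrow> 'k \<Rightarrow> nat \<Rightarrow> real) \<Rightarrow> (nat list \<Rightarrow> real) \<Rightarrow> bool" where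
  "fibers_in_span D p K W T \<longleftrightarrow> (\<forall>i<D. \<forall>l\<in>tidx D {..<p}. in_span p K (W i) (\<lambda>x. T (l[i := x])))"

lemma orthonormal_expansion:
  fixes T :: "nat list \<Rightarrow> real" and W :: "nat \<Rightarrow> nat \<Rightarrow> nat \<Rightarrow> real"
  assumes W: "\<forall>i<D. orthonormal_or_zero p s (W i)" and T: "fibers_in_span D p {..<s} W T"
    and l: "l \<in> tidx D {..<p}"
  shows "T l = (\<Sum>ks\<in>tidx D {..<s}. multi_mode_prod D {..<p} W T ks * (\<Prod>i<D. W i (ks ! i) (l ! i)))"
proof -
  have act: "\<forall>i\<in>{..<D}. \<forall>l\<in>tidx D {..<p}.
      (\<Sum>y<p. T (l[i := y]) * (\<Sum>k<s. W i k y * W i k x)) = T (l[i := x])" if "x < p" for x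
  proof (intro ballI)
    fix i l assume "i \<in> {..<D}" "l \<in> tidx D {..<p}"
    then show "(\<Sum>y<p. T (l[i := y]) * (\<Sum>k<s. W i k y * W i k x)) = T (l[i := x])"
      using in_span_projection[of p s "W i" "\<lambda>y. T (l[i := y])" x] W T that
      unfolding fibers_in_span_def by auto
  qed
  have lp: "l ! i < p" if "i < D" for i using l that unfolding tidx_iff_nth by auto
  have "(\<Sum>ks\<in>tidx D {..<s}. multi_mode_prod D {..<p} W T ks * (\<Prod>i<D. W i (ks ! i) (l ! i)))
      = (\<Sum>ks\<in>tidx D {..<s}. \<Sum>l'\<in>tidx D {..<p}. T l' * (\<Prod>i<D. W i (ks ! i) (l' ! i) * W i (ks ! i) (l ! i)))"
    unfolding multi_mode_prod_def by (simp add: sum_distrib_right prod.distrib mult.assoc)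
  also have "\<dots> = (\<Sum>l'\<in>tidx D {..<p}. T l' * (\<Sum>ks\<in>tidx D {..<s}. \<Prod>i<D. W i (ks ! i) (l' ! i) * W i (ks ! i) (l ! i)))"
    by (subst sum.swap) (simp add: sum_distrib_left)
  also have "\<dots> = (\<Sum>l'\<in>tidx D {..<p}. T l' * (\<Prod>i<D. \<Sum>k<s. W i k (l' ! i) * W i k (l ! i)))"
    by (intro sum.cong refl arg_cong2[where f="(*)"] sum_prod_tidx) simp
  also have "\<dots> = (\<Sum>l'\<in>tidx D {..<p}. T l' * (\<Prod>k<D. if k \<in> {..<D} then (\<lambda>i y. \<Sum>k<s. W i k y * W i k (l ! i)) k (l' ! k) else (\<lambda>_ _. 0) k (l' ! k)))"
    by simp
  also have "\<dots> = (\<Sum>l'\<in>tidx D {..<p}. T l' * (\<Prod>k<D. if k \<in> {..<D} then (if l' ! k = l ! k then 1 else 0) else (\<lambda>_ _. 0) k (l' ! k)))"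
    by (rule sum_mode_kernels_eval) (use act lp in auto)
  also have "\<dots> = T l"
    using sum_tidx_delta[OF _ l] by simp
  finally show ?thesis by simp
qed

lemma parseval:
  fixes T T' :: "nat list \<Rightarrow> real" and W :: "nat \<Rightarrow> nat \<Rightarrow> nat \<Rightarrow> real"
  assumes W: "\<forall>i<D. orthonormal_or_zero p s (W i)" and T': "fibers_in_span D p {..<s} W T'"
  shows "inner_on (tidx D {..<s}) (multi_mode_prod D {..<p} W T) (multi_mode_prod D {..<p} W T') =
         inner_on (tidx D {..<p}) T T'"
proof -
  let ?C' = "multi_mode_prod D {..<p} W T'"
  have "inner_on (tidx D {..<s}) (multi_mode_prod D {..<p} W T) ?C' =
      (\<Sum>l\<in>tidx D {..<p}. T l * (\<Sum>ks\<in>tidx D {..<s}. ?C' ks * (\<Prod>i<D. W i (ks ! i) (l ! i))))"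
    unfolding inner_on_def multi_mode_prod_def[of D "{..<p}" W T]
    by (simp add: sum_distrib_left sum_distrib_right mult_ac, rule sum.swap)
  also have "\<dots> = inner_on (tidx D {..<p}) T T'"
    unfolding inner_on_def using orthonormal_expansion[OF W T'] by (intro sum.cong) auto
  finally show ?thesis .
qed

lemma multi_mode_prod_eq_0:
  fixes W :: "nat \<Rightarrow> nat \<Rightarrow> nat \<Rightarrow> real" and p :: nat
  assumes "i < D" and "sqn {..<p} (W i (ks ! i)) = 0"
  shows "multi_mode_prod D {..<p} W T ks = 0"
  unfolding multi_mode_prod_def
proof (rule sum.neutral, rule ballI)
  fix l assume l: "l \<in> tidx D {..<p}"
  then have "l ! i < p" using assms(1) by (simp add: tidx_iff_nth)
  then have "W i (ks ! i) (l ! i) = 0" using sqn_eq_0D[of "{..<p}" "W i (ks ! i)" "l ! i"] assms(2) by simp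
  then show "T l * (\<Prod>i<D. W i (ks ! i) (l ! i)) = 0" using assms(1) by (auto simp: prod_zero_iff)
qed

definition all_orthogonal :: "nat \<Rightarrow> nat \<Rightarrow> (nat list \<Rightarrow> real) \<Rightarrow> bool" where
  "all_orthogonal D s C \<longleftrightarrow> (\<forall>i<D. \<forall>a<s. \<forall>b<s. a \<noteq> b \<longrightarrow>
     (\<Sum>ks\<in>{ks\<in>tidx D {..<s}. ks ! i = a}. C ks * C (ks[i := b])) = 0)"

lemma orthonormal_or_zero_unit_first:
  assumes "0 < p"
  shows "orthonormal_or_zero p s (\<lambda>k y. if k = 0 \<and> y = 0 then 1 else 0)"
proof -
  have sqn_k: "sqn {..<p} (\<lambda>y. if k = 0 \<and> y = 0 then 1 else 0) = (if k = 0 then 1 else 0)" for k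
  proof -
    have "sqn {..<p} (\<lambda>y. if k = 0 \<and> y = 0 then 1 else 0) = (\<Sum>y<p. if k = 0 \<and> y = 0 then 1 else 0)"
      unfolding sqn_def by (intro sum.cong) auto
    then show ?thesis using assms by (cases "k = 0") simp_all
  qed
  have inner_kk': "inner_on {..<p} (\<lambda>y. if k = 0 \<and> y = 0 then 1 else 0)
      (\<lambda>y. if k' = 0 \<and> y = 0 then 1 else 0) = 0" if "k \<noteq> k'" for k k'
    unfolding inner_on_def using that by (intro sum.neutral) auto
  show ?thesis
    unfolding orthonormal_or_zero_def
  proof (intro conjI allI impI)
    fix k
    show "sqn {..<p} (\<lambda>y. if k = 0 \<and> y = 0 then 1 else 0) = 0 \<or>
        sqn {..<p} (\<lambda>y. if k = 0 \<and> y = 0 then 1 else 0) = 1"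
      unfolding sqn_k by simp
  next
    fix k k' :: nat assume "k \<noteq> k'"
    then show "inner_on {..<p} (\<lambda>y. if k = 0 \<and> y = 0 then 1 else 0)
        (\<lambda>y. if k' = 0 \<and> y = 0 then 1 else 0) = 0" by (rule inner_kk')
  qed
qed

lemma sum_tidx_nth_reindex:
  assumes j: "j < D" and a: "a \<in> P" and c0: "c0 \<in> P"
  shows "(\<Sum>ks\<in>{ks\<in>tidx D P. ks ! j = a}. f ks) = (\<Sum>ks\<in>{ks\<in>tidx D P. ks ! j = c0}. f (ks[j := a]))"
  by (rule sum.reindex_bij_witness[of _ "\<lambda>ks. ks[j := a]" "\<lambda>ks. ks[j := c0]"])
    (use j a c0 in \<open>auto simp: tidx_update length_tidx\<close>)

lemma multi_mode_prod_split_mode: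
  fixes W :: "nat \<Rightarrow> nat \<Rightarrow> nat \<Rightarrow> real" and T :: "nat list \<Rightarrow> real"
  assumes p: "0 < p" and j: "j < D"
  shows "multi_mode_prod D {..<p} W T ks =
    (\<Sum>l\<in>{l\<in>tidx D {..<p}. l ! j = 0}.
       (\<Sum>y<p. T (l[j := y]) * W j (ks ! j) y) * (\<Prod>i\<in>{..<D} - {j}. W i (ks ! i) (l ! i)))"
proof -
  have "multi_mode_prod D {..<p} W T ks = (\<Sum>l\<in>{l\<in>tidx D {..<p}. l ! j = 0}.
      \<Sum>y<p. T (l[j := y]) * (\<Prod>i<D. W i (ks ! i) ((l[j := y]) ! i)))"
    unfolding multi_mode_prod_def using sum_tidx_split_nth[of "{..<p}" j D 0] p j by simp
  also have "\<dots> = (\<Sum>l\<in>{l\<in>tidx D {..<p}. l ! j = 0}.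
       (\<Sum>y<p. T (l[j := y]) * W j (ks ! j) y) * (\<Prod>i\<in>{..<D} - {j}. W i (ks ! i) (l ! i)))"
  proof (intro sum.cong refl)
    fix l assume "l \<in> {l\<in>tidx D {..<p}. l ! j = 0}"
    then have len: "length l = D" using length_tidx by blast
    have "(\<Prod>i<D. W i (ks ! i) ((l[j := y]) ! i)) =
        W j (ks ! j) y * (\<Prod>i\<in>{..<D} - {j}. W i (ks ! i) (l ! i))" for y
    proof -
      have "(\<Prod>i\<in>{..<D} - {j}. W i (ks ! i) ((l[j := y]) ! i)) = (\<Prod>i\<in>{..<D} - {j}. W i (ks ! i) (l ! i))"
        by (intro prod.cong) auto
      then show ?thesis using len j by (simp add: prod_lessThan_remove[OF j])
    qed
    then show "(\<Sum>y<p. T (l[j := y]) * (\<Prod>i<D. W i (ks ! i) ((l[j := y]) ! i))) =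
        (\<Sum>y<p. T (l[j := y]) * W j (ks ! j) y) * (\<Prod>i\<in>{..<D} - {j}. W i (ks ! i) (l ! i))"
      by (simp add: sum_distrib_right mult.assoc)
  qed
  finally show ?thesis .
qed

lemma fibers_in_span_contract_mode:
  fixes T :: "nat list \<Rightarrow> real" and W :: "nat \<Rightarrow> nat \<Rightarrow> nat \<Rightarrow> real"
  assumes T: "fibers_in_span D p {..<s} W T" and s: "0 < s" and j: "j < D"
  shows "fibers_in_span D p {..<s} (W(j := (\<lambda>k y. if k = 0 \<and> y = 0 then 1 else 0)))
           (\<lambda>l. if l ! j = 0 then (\<Sum>t<p. T (l[j := t]) * w t) else 0)"
  unfolding fibers_in_span_def
proof (intro allI impI ballI)
  fix i l assume i: "i < D" and l: "l \<in> tidx D {..<p}"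
  have len: "length l = D" using l by (rule length_tidx)
  define c where "c = (\<Sum>t<p. T (l[j := t]) * w t)"
  show "in_span p {..<s} ((W(j := (\<lambda>k y. if k = 0 \<and> y = 0 then 1 else 0))) i)
      (\<lambda>x. if l[i := x] ! j = 0 then (\<Sum>t<p. T ((l[i := x])[j := t]) * w t) else 0)"
  proof (cases "i = j")
    case True
    have eq: "(if x = 0 then c else 0) =
        (\<Sum>k<s. (if k = 0 then c else 0) * (if k = 0 \<and> x = 0 then 1 else 0))" for x
      using s by (simp add: if_distrib[of "\<lambda>a. a * _"] cong: if_cong)
    show ?thesis
      unfolding in_span_def
    proof (intro exI[of _ "\<lambda>k. if k = 0 then c else 0"] allI impI)
      fix x assume "x < p"
      have "(if (l[i := x]) ! j = 0 then (\<Sum>t<p. T ((l[i := x])[j := t]) * w t) else 0) =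
          (if x = 0 then c else 0)"
        using True len j by (simp add: c_def)
      then show "(if (l[i := x]) ! j = 0 then (\<Sum>t<p. T ((l[i := x])[j := t]) * w t) else 0) =
          (\<Sum>k<s. (if k = 0 then c else 0) * (W(j := (\<lambda>k y. if k = 0 \<and> y = 0 then 1 else 0))) i k x)"
        using eq[of x] True by simp
    qed
  next
    case False
    then have Wi: "(W(j := (\<lambda>k y. if k = 0 \<and> y = 0 then 1 else 0))) i = W i" by simp
    show ?thesis
      unfolding Wi
    proof (rule in_span_trans[of "{..<p}" p "{..<s}" "W i" "\<lambda>t x. T ((l[j := t])[i := x])"])
      show "\<forall>t\<in>{..<p}. in_span p {..<s} (W i) (\<lambda>x. T ((l[j := t])[i := x]))"
        using T i l unfolding fibers_in_span_def by (auto intro: tidx_update)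
      have "(if l[i := x] ! j = 0 then (\<Sum>t<p. T ((l[i := x])[j := t]) * w t) else 0) =
          (\<Sum>t<p. (if l ! j = 0 then w t else 0) * T ((l[j := t])[i := x]))" for x
        using False by (simp add: list_update_swap mult.commute)
      then show "in_span p {..<p} (\<lambda>t x. T ((l[j := t])[i := x]))
          (\<lambda>x. if l[i := x] ! j = 0 then (\<Sum>t<p. T ((l[i := x])[j := t]) * w t) else 0)"
        unfolding in_span_def by (intro exI[of _ "\<lambda>t. if l ! j = 0 then w t else 0"]) simp
    qed
  qed
qed

lemma multi_mode_prod_update_nth:
  fixes W :: "nat \<Rightarrow> nat \<Rightarrow> nat \<Rightarrow> real" and T :: "nat list \<Rightarrow> real"
  assumes p: "0 < p" and j: "j < D" and ks: "length ks = D"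
  shows "multi_mode_prod D {..<p} W T (ks[j := c]) =
    (\<Sum>l\<in>{l\<in>tidx D {..<p}. l ! j = 0}. (\<Sum>t<p. T (l[j := t]) * W j c t) *
       (\<Prod>i\<in>{..<D} - {j}. W i (ks ! i) (l ! i)))"
proof -
  have "(\<Prod>i\<in>{..<D} - {j}. W i ((ks[j := c]) ! i) (l ! i)) = (\<Prod>i\<in>{..<D} - {j}. W i (ks ! i) (l ! i))"
    for l by (intro prod.cong) auto
  then show ?thesis unfolding multi_mode_prod_split_mode[OF p j] using ks j by (simp add: mult.commute)
qed

lemma multi_mode_prod_contract_mode:
  fixes W :: "nat \<Rightarrow> nat \<Rightarrow> nat \<Rightarrow> real" and T :: "nat list \<Rightarrow> real"
  assumes p: "0 < p" and j: "j < D"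
  shows "multi_mode_prod D {..<p} (W(j := (\<lambda>k y. if k = 0 \<and> y = 0 then 1 else 0)))
      (\<lambda>l. if l ! j = 0 then (\<Sum>t<p. T (l[j := t]) * w t) else 0) ks =
    (if ks ! j = 0
     then (\<Sum>l\<in>{l\<in>tidx D {..<p}. l ! j = 0}. (\<Sum>t<p. T (l[j := t]) * w t) *
             (\<Prod>i\<in>{..<D} - {j}. W i (ks ! i) (l ! i)))
     else 0)"
proof -
  let ?e = "\<lambda>k y. if k = 0 \<and> y = 0 then 1 else (0::real)"
  have contract: "(\<Sum>y<p. (if (l[j := y]) ! j = 0 then (\<Sum>t<p. T ((l[j := y])[j := t]) * w t) else 0) *
        ?e (ks ! j) y) = (if ks ! j = 0 then (\<Sum>t<p. T (l[j := t]) * w t) else 0)"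
    if "l \<in> {l\<in>tidx D {..<p}. l ! j = 0}" for l
  proof -
    have "length l = D" using that length_tidx by blast
    then show ?thesis using j p by (simp add: if_distrib[of "\<lambda>a. a * _"] cong: if_cong)
  qed
  have "(\<Prod>i\<in>{..<D} - {j}. (W(j := ?e)) i (ks ! i) (l ! i)) = (\<Prod>i\<in>{..<D} - {j}. W i (ks ! i) (l ! i))"
    for l by (intro prod.cong) auto
  then show ?thesis
    unfolding multi_mode_prod_split_mode[OF p j] using contract
    by (auto simp: sum_distrib_right intro!: sum.neutral)
qed

(* Contracting mode j of T against w inside the slice l ! j = 0 gives a tensor whose
   coefficients, with the j-th basis replaced by the first unit vector, form the core slice
   ks |-> C (ks[j := a]) when w = W j a; Parseval then turns inner products of core slices into
   values of the Gram form of the mode-j fibers. *)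
lemma slice_inner_eq_gram_form:
  fixes W :: "nat \<Rightarrow> nat \<Rightarrow> nat \<Rightarrow> real" and T :: "nat list \<Rightarrow> real"
  assumes W: "\<forall>i<D. orthonormal_or_zero p s (W i)" and T: "fibers_in_span D p {..<s} W T"
    and p: "0 < p" and j: "j < D" and a: "a < s"
  shows "(\<Sum>ks\<in>{ks\<in>tidx D {..<s}. ks ! j = a}.
            multi_mode_prod D {..<p} W T ks * multi_mode_prod D {..<p} W T (ks[j := b])) =
         gram_form {l\<in>tidx D {..<p}. l ! j = 0} (\<lambda>l t. T (l[j := t])) p (W j a) (W j b)"
proof -
  let ?C = "multi_mode_prod D {..<p} W T"
  let ?K0 = "{ks\<in>tidx D {..<s}. ks ! j = 0}"
  define W' where "W' = W(j := (\<lambda>k y. if k = 0 \<and> y = 0 then 1 else 0))"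
  define S where "S w l = (if l ! j = 0 then (\<Sum>t<p. T (l[j := t]) * w t) else 0)" for w l
  have W': "\<forall>i<D. orthonormal_or_zero p s (W' i)"
    using W orthonormal_or_zero_unit_first[OF p, of s] by (simp add: W'_def)
  have S_fib: "fibers_in_span D p {..<s} W' (S w)" for w
    unfolding S_def W'_def using fibers_in_span_contract_mode[OF T _ j] a by simp
  have core_S: "multi_mode_prod D {..<p} W' (S (W j c)) ks = (if ks ! j = 0 then ?C (ks[j := c]) else 0)"
    if "ks \<in> tidx D {..<s}" for ks c
    unfolding W'_def S_def multi_mode_prod_contract_mode[OF p j]
      multi_mode_prod_update_nth[OF p j length_tidx[OF that]] ..
  have "(\<Sum>ks\<in>{ks\<in>tidx D {..<s}. ks ! j = a}. ?C ks * ?C (ks[j := b])) =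
      (\<Sum>ks\<in>?K0. ?C (ks[j := a]) * ?C ((ks[j := a])[j := b]))"
    using sum_tidx_nth_reindex[of j D a "{..<s}" 0 "\<lambda>ks. ?C ks * ?C (ks[j := b])"] j a by simp
  also have "\<dots> = (\<Sum>ks\<in>tidx D {..<s}. if ks ! j = 0 then ?C (ks[j := a]) * ?C (ks[j := b]) else 0)"
    by (simp add: sum.inter_filter finite_tidx)
  also have "\<dots> = inner_on (tidx D {..<s}) (multi_mode_prod D {..<p} W' (S (W j a)))
      (multi_mode_prod D {..<p} W' (S (W j b)))"
    unfolding inner_on_def by (intro sum.cong) (auto simp: core_S)
  also have "\<dots> = inner_on (tidx D {..<p}) (S (W j a)) (S (W j b))"
    by (rule parseval[OF W' S_fib])
  also have "\<dots> = gram_form {l\<in>tidx D {..<p}. l ! j = 0} (\<lambda>l t. T (l[j := t])) p (W j a) (W j b)"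
    unfolding gram_form_def inner_on_def lin_apply_def S_def
    by (simp add: sum.inter_filter finite_tidx if_distrib cong: if_cong)
  finally show ?thesis .
qed

lemma hosvd:
  fixes T :: "nat list \<Rightarrow> real" and v :: "nat \<Rightarrow> 'k \<Rightarrow> nat \<Rightarrow> real"
  assumes p: "0 < p" and K: "finite K" and T: "fibers_in_span D p K v T"
  shows "\<exists>W. (\<forall>i<D. orthonormal_or_zero p (card K) (W i)) \<and> fibers_in_span D p {..<card K} W T \<and>
             all_orthogonal D (card K) (multi_mode_prod D {..<p} W T)"
proof -
  let ?s = "card K"
  let ?L0 = "\<lambda>j. {l\<in>tidx D {..<p}. l ! j = 0}"
  have "\<forall>j. j < D \<longrightarrow> (\<exists>w. orthonormal_or_zero p ?s w \<and>
      (\<forall>l\<in>?L0 j. in_span p {..<?s} w (\<lambda>t. T (l[j := t]))) \<and>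
      (\<forall>a<?s. \<forall>b<?s. a \<noteq> b \<longrightarrow> gram_form (?L0 j) (\<lambda>l t. T (l[j := t])) p (w a) (w b) = 0))"
  proof (intro allI impI)
    fix j assume j: "j < D"
    have "finite (?L0 j)" by (simp add: finite_tidx)
    moreover have "\<forall>l\<in>?L0 j. in_span p K (v j) (\<lambda>t. T (l[j := t]))"
      using T j unfolding fibers_in_span_def by auto
    ultimately show "\<exists>w. orthonormal_or_zero p ?s w \<and>
      (\<forall>l\<in>?L0 j. in_span p {..<?s} w (\<lambda>t. T (l[j := t]))) \<and>
      (\<forall>a<?s. \<forall>b<?s. a \<noteq> b \<longrightarrow> gram_form (?L0 j) (\<lambda>l t. T (l[j := t])) p (w a) (w b) = 0)"
      by (rule diagonalizing_basis[OF _ K])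
  qed
  then obtain W where W: "\<forall>j. j < D \<longrightarrow> orthonormal_or_zero p ?s (W j) \<and>
      (\<forall>l\<in>?L0 j. in_span p {..<?s} (W j) (\<lambda>t. T (l[j := t]))) \<and>
      (\<forall>a<?s. \<forall>b<?s. a \<noteq> b \<longrightarrow> gram_form (?L0 j) (\<lambda>l t. T (l[j := t])) p (W j a) (W j b) = 0)"
    unfolding choice_iff' by blast
  have W_on: "\<forall>i<D. orthonormal_or_zero p ?s (W i)" using W by blast
  have fib: "fibers_in_span D p {..<?s} W T"
    unfolding fibers_in_span_def
  proof (intro allI impI ballI)
    fix i l assume i: "i < D" and l: "l \<in> tidx D {..<p}"
    have "l[i := 0] \<in> ?L0 i" using l i p by (simp add: tidx_update length_tidx)
    moreover have "\<forall>l\<in>?L0 i. in_span p {..<?s} (W i) (\<lambda>t. T (l[i := t]))" using W i by blast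
    ultimately show "in_span p {..<?s} (W i) (\<lambda>x. T (l[i := x]))" by fastforce
  qed
  have "all_orthogonal D ?s (multi_mode_prod D {..<p} W T)"
    unfolding all_orthogonal_def
  proof (intro allI impI)
    fix j a b assume "j < D" "a < ?s" "b < ?s" "a \<noteq> b"
    then show "(\<Sum>ks\<in>{ks\<in>tidx D {..<?s}. ks ! j = a}.
        multi_mode_prod D {..<p} W T ks * multi_mode_prod D {..<p} W T (ks[j := b])) = 0"
      using slice_inner_eq_gram_form[OF W_on fib p] W by simp
  qed
  then show ?thesis using W_on fib by blast
qed

lemma fibers_in_span_outer_sum:
  fixes H :: "'k list \<Rightarrow> real" and v :: "nat \<Rightarrow> 'k \<Rightarrow> nat \<Rightarrow> real"
  assumes K: "finite K"
    and T: "\<forall>l\<in>tidx D {..<p}. T l = (\<Sum>ks\<in>tidx D K. H ks * (\<Prod>i<D. v i (ks ! i) (l ! i)))"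
  shows "fibers_in_span D p K v T"
  unfolding fibers_in_span_def
proof (intro allI impI ballI)
  fix j l assume j: "j < D" and l: "l \<in> tidx D {..<p}"
  define c where "c k = (\<Sum>ks\<in>{ks\<in>tidx D K. ks ! j = k}. H ks * (\<Prod>i\<in>{..<D} - {j}. v i (ks ! i) (l ! i)))" for k
  have len: "length l = D" using l by (rule length_tidx)
  have "T (l[j := x]) = (\<Sum>k\<in>K. c k * v j k x)" if x: "x < p" for x
  proof -
    have "T (l[j := x]) = (\<Sum>ks\<in>tidx D K. H ks * (\<Prod>i\<in>{..<D} - {j}. v i (ks ! i) (l ! i)) * v j (ks ! j) x)"
    proof -
      have "(\<Prod>i\<in>{..<D} - {j}. v i (ks ! i) ((l[j := x]) ! i)) = (\<Prod>i\<in>{..<D} - {j}. v i (ks ! i) (l ! i))"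
        for ks by (intro prod.cong) auto
      then show ?thesis
        using T tidx_update[OF l, of x j] x len j by (simp add: prod_lessThan_remove[OF j] mult_ac)
    qed
    also have "\<dots> = (\<Sum>k\<in>K. \<Sum>ks\<in>{ks\<in>tidx D K. ks ! j = k}.
        H ks * (\<Prod>i\<in>{..<D} - {j}. v i (ks ! i) (l ! i)) * v j (ks ! j) x)"
      by (rule sum.group[symmetric]) (use K j in \<open>auto simp: finite_tidx tidx_iff_nth\<close>)
    also have "\<dots> = (\<Sum>k\<in>K. c k * v j k x)"
      unfolding c_def by (intro sum.cong refl) (simp add: sum_distrib_right)
    finally show ?thesis .
  qed
  then show "in_span p K (v j) (\<lambda>x. T (l[j := x]))"
    unfolding in_span_def by (intro exI[of _ c]) blast
qed

lemma fibers_in_span_divide: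
  assumes "fibers_in_span D p K v T"
  shows "fibers_in_span D p K v (\<lambda>l. T l / c)"
  unfolding fibers_in_span_def
proof (intro allI impI ballI)
  fix i l assume "i < D" "l \<in> tidx D {..<p}"
  then obtain a where a: "\<forall>x<p. T (l[i := x]) = (\<Sum>k\<in>K. a k * v i k x)"
    using assms unfolding fibers_in_span_def in_span_def by blast
  then have "\<forall>x<p. T (l[i := x]) / c = (\<Sum>k\<in>K. (a k / c) * v i k x)"
    by (simp add: sum_divide_distrib)
  then show "in_span p K (v i) (\<lambda>x. T (l[i := x]) / c)"
    unfolding in_span_def by (intro exI[of _ "\<lambda>k. a k / c"]) simp
qed

lemma hosvd_rank_le_orthonormal_expansion:
  assumes "hosvd_rank_le d n r X"
  shows "\<exists>q G. (\<forall>t<d. orthonormal_or_zero n r (q t)) \<and>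
     sqn (tidx d {..<r}) G = sqn (tidx d {..<n}) X \<and>
     (\<forall>ks. (\<exists>t<d. sqn {..<n} (q t (ks ! t)) = 0) \<longrightarrow> G ks = 0) \<and>
     (\<forall>l\<in>tidx d {..<n}. X l = (\<Sum>ks\<in>tidx d {..<r}. G ks * (\<Prod>t<d. q t (ks ! t) (l ! t))))"
proof -
  obtain b G0 where
    "\<forall>l\<in>tidx d {..<n}. X l = (\<Sum>ks\<in>tidx d {..<r}. G0 ks * (\<Prod>t<d. b t (ks ! t) (l ! t)))"
    using assms unfolding hosvd_rank_le_def by blast
  then have fib_b: "fibers_in_span d n {..<r} b X" by (rule fibers_in_span_outer_sum[rotated]) simp
  have "\<forall>t. t < d \<longrightarrow> (\<exists>q. orthonormal_or_zero n r q \<and> (\<forall>k\<in>{..<r}. in_span n {..<r} q (b t k)))"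
  proof (intro allI impI)
    fix t
    show "\<exists>q. orthonormal_or_zero n r q \<and> (\<forall>k\<in>{..<r}. in_span n {..<r} q (b t k))"
      using gram_schmidt[of "{..<r}" n "b t"] by simp
  qed
  then obtain q where q: "\<forall>t. t < d \<longrightarrow> orthonormal_or_zero n r (q t) \<and>
      (\<forall>k\<in>{..<r}. in_span n {..<r} (q t) (b t k))"
    unfolding choice_iff' by blast
  have q_on: "\<forall>t<d. orthonormal_or_zero n r (q t)" using q by blast
  have fib_q: "fibers_in_span d n {..<r} q X"
    unfolding fibers_in_span_def
  proof (intro allI impI ballI)
    fix t l assume "t < d" "l \<in> tidx d {..<n}"
    then show "in_span n {..<r} (q t) (\<lambda>x. X (l[t := x]))"
      using fib_b q in_span_trans[of "{..<r}" n "{..<r}" "q t" "b t"]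
      unfolding fibers_in_span_def by blast
  qed
  define G where "G = multi_mode_prod d {..<n} q X"
  have "sqn (tidx d {..<r}) G = sqn (tidx d {..<n}) X"
    using parseval[OF q_on fib_q, of X] unfolding G_def inner_on_self .
  moreover have "\<forall>ks. (\<exists>t<d. sqn {..<n} (q t (ks ! t)) = 0) \<longrightarrow> G ks = 0"
    unfolding G_def using multi_mode_prod_eq_0 by blast
  moreover have "\<forall>l\<in>tidx d {..<n}. X l = (\<Sum>ks\<in>tidx d {..<r}. G ks * (\<Prod>t<d. q t (ks ! t) (l ! t)))"
    unfolding G_def using orthonormal_expansion[OF q_on fib_q] by blast
  ultimately show ?thesis using q_on by (intro exI[of _ q] exI[of _ G]) blast
qed

section \<open>Reshaping and mode products\<close>

lemma nth_concat_blocks: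
  assumes "\<forall>js\<in>set jss. length js = \<kappa>" and "i < length jss" and "u < \<kappa>"
  shows "concat jss ! (i * \<kappa> + u) = jss ! i ! u"
  using assms
proof (induction jss arbitrary: i)
  case Nil then show ?case by simp
next
  case (Cons js jss)
  show ?case
  proof (cases i)
    case 0 then show ?thesis using Cons by (simp add: nth_append)
  next
    case (Suc i')
    have "concat (js # jss) ! (i * \<kappa> + u) = concat jss ! (i' * \<kappa> + u)"
      using Cons Suc by (simp add: nth_append)
    then show ?thesis using Cons Suc by simp
  qed
qed

lemma length_concat_blocks:
  "\<forall>js\<in>set jss. length js = \<kappa> \<Longrightarrow> length (concat jss) = length jss * \<kappa>"
  by (induction jss) auto

lemma blocks_of_tidx:
  assumes "jss \<in> tidx d' (tidx \<kappa> P)"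
  shows "\<forall>js\<in>set jss. length js = \<kappa>" "length jss = d'"
  using assms unfolding tidx_def by auto

lemma concat_tidx:
  assumes "jss \<in> tidx d' (tidx \<kappa> P)"
  shows "concat jss \<in> tidx (d' * \<kappa>) P"
  using assms length_concat_blocks[OF blocks_of_tidx(1)[OF assms]] blocks_of_tidx(2)[OF assms]
  unfolding tidx_def by auto

lemma concat_nth:
  assumes "jss \<in> tidx d' (tidx \<kappa> P)" "i < d'" "u < \<kappa>"
  shows "concat jss ! (i * \<kappa> + u) = jss ! i ! u"
  using nth_concat_blocks[OF blocks_of_tidx(1)[OF assms(1)]] blocks_of_tidx(2)[OF assms(1)] assms by simp

lemma block_index_less: "i < d' \<Longrightarrow> u < \<kappa> \<Longrightarrow> i * \<kappa> + u < d' * (\<kappa>::nat)"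
proof -
  assume "i < d'" "u < \<kappa>"
  then have "i * \<kappa> + u < i * \<kappa> + \<kappa>" by simp
  also have "\<dots> \<le> d' * \<kappa>" using \<open>i < d'\<close> by (metis add.commute mult_Suc less_eq_Suc_le mult_le_mono1)
  finally show ?thesis .
qed

lemma inj_on_concat_tidx: "inj_on concat (tidx d' (tidx \<kappa> P))"
proof
  fix jss jss' assume a: "jss \<in> tidx d' (tidx \<kappa> P)" and b: "jss' \<in> tidx d' (tidx \<kappa> P)"
    and eq: "concat jss = concat jss'"
  have "jss ! i = jss' ! i" if i: "i < d'" for i
  proof (rule nth_equalityI)
    have li: "length (jss ! i) = \<kappa>" "length (jss' ! i) = \<kappa>"
      using blocks_of_tidx[OF a] blocks_of_tidx[OF b] i nth_mem by auto
    then show "length (jss ! i) = length (jss' ! i)" by simp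
    fix u assume "u < length (jss ! i)"
    then have u: "u < \<kappa>" using li by simp
    show "jss ! i ! u = jss' ! i ! u"
      using concat_nth[OF a i u] concat_nth[OF b i u] eq by simp
  qed
  then show "jss = jss'" using a b unfolding tidx_def by (auto intro: nth_equalityI)
qed

lemma tidx_subset_concat_image:
  assumes k: "\<kappa> \<ge> 1"
  shows "tidx (d' * \<kappa>) P \<subseteq> concat ` tidx d' (tidx \<kappa> P)"
proof
  fix l assume l: "l \<in> tidx (d' * \<kappa>) P"
  have len: "length l = d' * \<kappa>" and lP: "set l \<subseteq> P" using l unfolding tidx_def by auto
  define jss where "jss = map (\<lambda>i. take \<kappa> (drop (i * \<kappa>) l)) [0..<d']"
  have blk: "length (take \<kappa> (drop (i * \<kappa>) l)) = \<kappa>" if "i < d'" for i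
  proof -
    have "i * \<kappa> + \<kappa> \<le> d' * \<kappa>" using that by (metis add.commute mult_Suc less_eq_Suc_le mult_le_mono1)
    then show ?thesis using len by simp
  qed
  have jt: "jss \<in> tidx d' (tidx \<kappa> P)"
    unfolding tidx_def jss_def using blk lP by (auto dest: in_set_takeD in_set_dropD)
  have "concat jss = l"
  proof (rule nth_equalityI)
    show "length (concat jss) = length l"
      using length_concat_blocks[OF blocks_of_tidx(1)[OF jt]] blocks_of_tidx(2)[OF jt] len by simp
    fix t assume "t < length (concat jss)"
    then have t: "t < d' * \<kappa>"
      using length_concat_blocks[OF blocks_of_tidx(1)[OF jt]] blocks_of_tidx(2)[OF jt] by simp
    have i: "t div \<kappa> < d'" and u: "t mod \<kappa> < \<kappa>" using t k by (simp_all add: div_less_iff_less_mult)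
    have tt: "t = t div \<kappa> * \<kappa> + t mod \<kappa>" by simp
    have "concat jss ! t = jss ! (t div \<kappa>) ! (t mod \<kappa>)"
      using concat_nth[OF jt i u] tt by simp
    also have "\<dots> = l ! (t div \<kappa> * \<kappa> + t mod \<kappa>)"
      unfolding jss_def using i u blk[OF i] len t by simp
    finally show "concat jss ! t = l ! t" using tt by simp
  qed
  then show "l \<in> concat ` tidx d' (tidx \<kappa> P)" using jt by blast
qed

lemma concat_bij:
  assumes "\<kappa> \<ge> 1"
  shows "bij_betw concat (tidx d' (tidx \<kappa> P)) (tidx (d' * \<kappa>) P)"
  unfolding bij_betw_def
  using inj_on_concat_tidx tidx_subset_concat_image[OF assms] concat_tidx by blast

lemma prod_regroup:
  fixes h :: "nat \<Rightarrow> real"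
  shows "(\<Prod>t<d' * \<kappa>. h t) = (\<Prod>i<d'. \<Prod>u<\<kappa>. h (i * \<kappa> + u))"
proof -
  have "(\<Prod>t<d' * \<kappa>. h t) = (\<Prod>i<d'. prod h {i * \<kappa>..<i * \<kappa> + \<kappa>})"
    by (rule prod.nat_group[symmetric])
  also have "\<dots> = (\<Prod>i<d'. \<Prod>u<\<kappa>. h (i * \<kappa> + u))"
  proof (rule prod.cong[OF refl])
    fix i
    have "prod h {i * \<kappa>..<i * \<kappa> + \<kappa>} = prod h {0 + i * \<kappa>..<\<kappa> + i * \<kappa>}" by (simp add: add.commute)
    also have "\<dots> = (\<Prod>u\<in>{0..<\<kappa>}. h (u + i * \<kappa>))" by (rule prod.shift_bounds_nat_ivl)
    also have "\<dots> = (\<Prod>u<\<kappa>. h (i * \<kappa> + u))" by (simp add: atLeast0LessThan add.commute)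
    finally show "prod h {i * \<kappa>..<i * \<kappa> + \<kappa>} = (\<Prod>u<\<kappa>. h (i * \<kappa> + u))" .
  qed
  finally show ?thesis .
qed

(* The reshaping R sends a rank-one term with factors q t to the outer product of these
   Kronecker products of consecutive factors (reshape_outer_sum). *)
definition block_kron :: "nat \<Rightarrow> (nat \<Rightarrow> 'k \<Rightarrow> nat \<Rightarrow> real) \<Rightarrow> nat \<Rightarrow> 'k list \<Rightarrow> nat list \<Rightarrow> real" where
  "block_kron \<kappa> q i a c = (\<Prod>u<\<kappa>. q (i * \<kappa> + u) (a ! u) (c ! u))"

lemma reshape_outer_sum:
  fixes X :: "nat list \<Rightarrow> real" and G :: "'k list \<Rightarrow> real"
  assumes k: "\<kappa> \<ge> 1"
    and X: "\<forall>l\<in>tidx (d' * \<kappa>) P. X l = (\<Sum>ks\<in>tidx (d' * \<kappa>) K. G ks * (\<Prod>t<d' * \<kappa>. q t (ks ! t) (l ! t)))"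
    and jss: "jss \<in> tidx d' (tidx \<kappa> P)"
  shows "reshape X jss =
    (\<Sum>kss\<in>tidx d' (tidx \<kappa> K). G (concat kss) * (\<Prod>i<d'. block_kron \<kappa> q i (kss ! i) (jss ! i)))"
proof -
  have "reshape X jss = (\<Sum>ks\<in>tidx (d' * \<kappa>) K. G ks * (\<Prod>t<d' * \<kappa>. q t (ks ! t) (concat jss ! t)))"
    unfolding reshape_def using X concat_tidx[OF jss] by blast
  also have "\<dots> = (\<Sum>kss\<in>tidx d' (tidx \<kappa> K). G (concat kss) * (\<Prod>t<d' * \<kappa>. q t (concat kss ! t) (concat jss ! t)))"
    using sum.reindex_bij_betw[OF concat_bij[OF k, of d' K],
        of "\<lambda>ks. G ks * (\<Prod>t<d' * \<kappa>. q t (ks ! t) (concat jss ! t))"] by simp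
  also have "\<dots> = (\<Sum>kss\<in>tidx d' (tidx \<kappa> K). G (concat kss) * (\<Prod>i<d'. block_kron \<kappa> q i (kss ! i) (jss ! i)))"
  proof (rule sum.cong[OF refl])
    fix kss assume kss: "kss \<in> tidx d' (tidx \<kappa> K)"
    have "(\<Prod>t<d' * \<kappa>. q t (concat kss ! t) (concat jss ! t)) =
        (\<Prod>i<d'. \<Prod>u<\<kappa>. q (i * \<kappa> + u) (concat kss ! (i * \<kappa> + u)) (concat jss ! (i * \<kappa> + u)))"
      by (rule prod_regroup)
    also have "\<dots> = (\<Prod>i<d'. block_kron \<kappa> q i (kss ! i) (jss ! i))"
      unfolding block_kron_def using concat_nth[OF kss] concat_nth[OF jss] by (intro prod.cong refl) auto
    finally show "G (concat kss) * (\<Prod>t<d' * \<kappa>. q t (concat kss ! t) (concat jss ! t)) =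
        G (concat kss) * (\<Prod>i<d'. block_kron \<kappa> q i (kss ! i) (jss ! i))" by simp
  qed
  finally show ?thesis .
qed

lemma multi_mode_prod_outer_sum:
  fixes Y :: "'c list \<Rightarrow> real" and g :: "'k list \<Rightarrow> real"
  assumes C: "finite C"
    and Y: "\<forall>jss\<in>tidx D C. Y jss = (\<Sum>ks\<in>K. g ks * (\<Prod>i<D. v i (ks ! i) (jss ! i)))"
  shows "multi_mode_prod D C A Y ls = (\<Sum>ks\<in>K. g ks * (\<Prod>i<D. lin_apply (A i) C (v i (ks ! i)) (ls ! i)))"
proof -
  have "multi_mode_prod D C A Y ls =
      (\<Sum>jss\<in>tidx D C. \<Sum>ks\<in>K. g ks * (\<Prod>i<D. A i (ls ! i) (jss ! i) * v i (ks ! i) (jss ! i)))"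
    unfolding multi_mode_prod_def using Y
    by (intro sum.cong refl) (simp add: sum_distrib_left prod.distrib mult_ac)
  also have "\<dots> = (\<Sum>ks\<in>K. g ks * (\<Sum>jss\<in>tidx D C. \<Prod>i<D. A i (ls ! i) (jss ! i) * v i (ks ! i) (jss ! i)))"
    by (subst sum.swap) (simp add: sum_distrib_left)
  also have "\<dots> = (\<Sum>ks\<in>K. g ks * (\<Prod>i<D. lin_apply (A i) C (v i (ks ! i)) (ls ! i)))"
    unfolding lin_apply_def by (intro sum.cong refl arg_cong2[where f = "(*)"] sum_prod_tidx C)
  finally show ?thesis .
qed

lemma multi_mode_prod_reshape_expansion:
  fixes X :: "nat list \<Rightarrow> real" and G :: "'k list \<Rightarrow> real" and A :: "nat \<Rightarrow> nat \<Rightarrow> nat list \<Rightarrow> real"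
  assumes k: "\<kappa> \<ge> 1" and P: "finite P"
    and X: "\<forall>l\<in>tidx (d' * \<kappa>) P. X l = (\<Sum>ks\<in>tidx (d' * \<kappa>) K. G ks * (\<Prod>t<d' * \<kappa>. q t (ks ! t) (l ! t)))"
  shows "multi_mode_prod d' (tidx \<kappa> P) A (reshape X) ls =
    (\<Sum>kss\<in>tidx d' (tidx \<kappa> K). G (concat kss) *
       (\<Prod>i<d'. lin_apply (A i) (tidx \<kappa> P) (block_kron \<kappa> q i (kss ! i)) (ls ! i)))"
  by (rule multi_mode_prod_outer_sum) (use reshape_outer_sum[OF k X] finite_tidx[OF P] in auto)

lemma sqn_outer_sum:
  fixes g :: "'k list \<Rightarrow> real" and z :: "nat \<Rightarrow> 'k \<Rightarrow> 'c \<Rightarrow> real"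
  assumes P: "finite P"
  shows "sqn (tidx D P) (\<lambda>ls. \<Sum>ks\<in>K. g ks * (\<Prod>i<D. z i (ks ! i) (ls ! i))) =
    (\<Sum>ks\<in>K. \<Sum>ks'\<in>K. g ks * g ks' * (\<Prod>i<D. inner_on P (z i (ks ! i)) (z i (ks' ! i))))"
proof -
  have "sqn (tidx D P) (\<lambda>ls. \<Sum>ks\<in>K. g ks * (\<Prod>i<D. z i (ks ! i) (ls ! i))) =
      (\<Sum>ls\<in>tidx D P. \<Sum>ks\<in>K. \<Sum>ks'\<in>K. g ks * g ks' * (\<Prod>i<D. z i (ks ! i) (ls ! i) * z i (ks' ! i) (ls ! i)))"
    unfolding sqn_def by (simp add: power2_eq_square sum_product prod.distrib mult_ac)
  also have "\<dots> = (\<Sum>ks\<in>K. \<Sum>ks'\<in>K. g ks * g ks' * (\<Sum>ls\<in>tidx D P. \<Prod>i<D. z i (ks ! i) (ls ! i) * z i (ks' ! i) (ls ! i)))"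
    by (subst sum.swap) (simp add: sum_distrib_left, subst sum.swap, rule refl)
  also have "\<dots> = (\<Sum>ks\<in>K. \<Sum>ks'\<in>K. g ks * g ks' * (\<Prod>i<D. inner_on P (z i (ks ! i)) (z i (ks' ! i))))"
    unfolding inner_on_def by (intro sum.cong refl arg_cong2[where f = "(*)"] sum_prod_tidx P)
  finally show ?thesis .
qed

section \<open>Perturbation inequalities\<close>

lemma abs_prod_diff_le:
  fixes a b :: "nat \<Rightarrow> real"
  assumes fin: "finite I" and ab: "\<forall>i\<in>I. \<bar>a i - b i\<bar> \<le> \<epsilon> \<and> \<bar>b i\<bar> \<le> 1" and e: "\<epsilon> \<ge> 0"
  shows "\<bar>prod a I - prod b I\<bar> \<le> (1 + \<epsilon>) ^ card I - 1"
  using fin ab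
proof (induction I rule: finite_induct)
  case empty
  then show ?case by simp
next
  case (insert x F)
  have IH: "\<bar>prod a F - prod b F\<bar> \<le> (1 + \<epsilon>) ^ card F - 1" using insert by auto
  have bF: "\<bar>prod b F\<bar> \<le> 1" unfolding abs_prod using insert by (intro prod_le_1) auto
  have ax: "\<bar>a x\<bar> \<le> 1 + \<epsilon>" and abx: "\<bar>a x - b x\<bar> \<le> \<epsilon>" using insert by (auto simp: abs_le_iff)
  have "prod a (insert x F) - prod b (insert x F) = a x * (prod a F - prod b F) + (a x - b x) * prod b F"
    using insert by (simp add: algebra_simps)
  then have "\<bar>prod a (insert x F) - prod b (insert x F)\<bar> \<le>
      \<bar>a x\<bar> * \<bar>prod a F - prod b F\<bar> + \<bar>a x - b x\<bar> * \<bar>prod b F\<bar>"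
    by (simp add: abs_mult[symmetric] abs_triangle_ineq)
  also have "\<dots> \<le> (1 + \<epsilon>) * ((1 + \<epsilon>) ^ card F - 1) + \<epsilon> * 1"
    by (intro add_mono mult_mono ax IH abx bF) (use e in auto)
  also have "\<dots> = (1 + \<epsilon>) ^ card (insert x F) - 1" using insert by (simp add: algebra_simps)
  finally show ?case .
qed

lemma one_plus_power_le:
  fixes \<epsilon> :: real
  assumes e: "\<epsilon> \<ge> 0" and N: "real N * \<epsilon> \<le> 1"
  shows "(1 + \<epsilon>) ^ N - 1 \<le> 2 * real N * \<epsilon>"
proof -
  have "(1 + \<epsilon>) ^ N \<le> exp \<epsilon> ^ N" using e by (intro power_mono) (auto simp: exp_ge_add_one_self)
  also have "\<dots> = exp (real N * \<epsilon>)" by (simp add: exp_of_nat_mult)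
  also have "\<dots> \<le> 1 + real N * \<epsilon> + (real N * \<epsilon>)^2" using e N by (intro exp_bound) auto
  also have "(real N * \<epsilon>)^2 \<le> real N * \<epsilon>"
  proof -
    have "0 \<le> real N * \<epsilon>" using e by simp
    then show ?thesis using N by (simp add: power2_eq_square mult_le_cancel_left1 mult_left_le)
  qed
  finally show ?thesis by (simp add: mult_ac)
qed

lemma quadratic_form_perturbation:
  fixes g :: "'k \<Rightarrow> real"
  assumes K: "finite K" and E: "0 \<le> E"
    and PQ: "\<And>k k'. k \<in> K \<Longrightarrow> k' \<in> K \<Longrightarrow> g k \<noteq> 0 \<Longrightarrow> g k' \<noteq> 0 \<Longrightarrow> \<bar>P k k' - Q k k'\<bar> \<le> E"
  shows "\<bar>(\<Sum>k\<in>K. \<Sum>k'\<in>K. g k * g k' * P k k') - (\<Sum>k\<in>K. \<Sum>k'\<in>K. g k * g k' * Q k k')\<bar>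
           \<le> E * card K * (\<Sum>k\<in>K. (g k)\<^sup>2)"
proof -
  have termwise: "\<bar>g k * g k' * (P k k' - Q k k')\<bar> \<le> \<bar>g k\<bar> * \<bar>g k'\<bar> * E" if "k \<in> K" "k' \<in> K" for k k'
    using PQ[OF that] E by (cases "g k = 0 \<or> g k' = 0") (auto simp: abs_mult mult_left_mono)
  have "\<bar>(\<Sum>k\<in>K. \<Sum>k'\<in>K. g k * g k' * P k k') - (\<Sum>k\<in>K. \<Sum>k'\<in>K. g k * g k' * Q k k')\<bar> =
      \<bar>\<Sum>k\<in>K. \<Sum>k'\<in>K. g k * g k' * (P k k' - Q k k')\<bar>"
    by (simp add: sum_subtractf right_diff_distrib)
  also have "\<dots> \<le> (\<Sum>k\<in>K. \<Sum>k'\<in>K. \<bar>g k * g k' * (P k k' - Q k k')\<bar>)"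
    by (rule order_trans[OF sum_abs sum_mono]) (rule sum_abs)
  also have "\<dots> \<le> (\<Sum>k\<in>K. \<Sum>k'\<in>K. \<bar>g k\<bar> * \<bar>g k'\<bar> * E)"
    using termwise by (intro sum_mono) auto
  also have "\<dots> = E * (\<Sum>k\<in>K. \<bar>g k\<bar>)\<^sup>2"
    by (simp add: power2_eq_square sum_product sum_distrib_left mult_ac)
  also have "\<dots> \<le> E * (card K * (\<Sum>k\<in>K. (g k)\<^sup>2))"
    using sum_squared_le_sum_of_squares[of "\<lambda>k. \<bar>g k\<bar>" K] E
    by (intro mult_left_mono) (auto simp: mult.commute)
  finally show ?thesis by (simp add: mult.assoc)
qed

section \<open>Restricted isometries\<close>

lemma kron_inner:
  fixes u u' :: "nat \<Rightarrow> nat \<Rightarrow> real"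
  assumes "finite P"
  shows "inner_on (tidx \<kappa> P) (\<lambda>c. \<Prod>j<\<kappa>. u j (c ! j)) (\<lambda>c. \<Prod>j<\<kappa>. u' j (c ! j)) = (\<Prod>j<\<kappa>. inner_on P (u j) (u' j))"
  unfolding inner_on_def using sum_prod_tidx[OF assms, where D=\<kappa> and f="\<lambda>j x. u j x * u' j x"]
  by (simp add: prod.distrib)

lemma kron_sqn:
  fixes u :: "nat \<Rightarrow> nat \<Rightarrow> real"
  assumes "finite P"
  shows "sqn (tidx \<kappa> P) (\<lambda>c. \<Prod>j<\<kappa>. u j (c ! j)) = (\<Prod>j<\<kappa>. sqn P (u j))"
  using kron_inner[OF assms, of \<kappa> u u] by (simp add: inner_on_self)

lemma S1_sqn: "x \<in> S1 \<kappa> n \<Longrightarrow> sqn (tidx \<kappa> {..<n}) x = 1"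
  unfolding S1_def using kron_sqn[of "{..<n}" \<kappa>] by auto

lemma S1_uminus:
  assumes k: "\<kappa> \<ge> 1" and y: "y \<in> S1 \<kappa> n"
  shows "(\<lambda>c. - y c) \<in> S1 \<kappa> n"
proof -
  obtain u where yu: "y = (\<lambda>c. \<Prod>j<\<kappa>. u j (c ! j))" and un: "\<forall>j<\<kappa>. sqn {..<n} (u j) = 1"
    using y unfolding S1_def by auto
  define u' where "u' = u(0 := (\<lambda>t. - u 0 t))"
  have k0: "0 < \<kappa>" using k by simp
  have "(\<lambda>c. - y c) = (\<lambda>c. \<Prod>j<\<kappa>. u' j (c ! j))"
  proof
    fix c
    have "(\<Prod>j<\<kappa>. u' j (c ! j)) = u' 0 (c ! 0) * (\<Prod>j\<in>{..<\<kappa>} - {0}. u' j (c ! j))"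
      by (rule prod_lessThan_remove[OF k0])
    also have "(\<Prod>j\<in>{..<\<kappa>} - {0}. u' j (c ! j)) = (\<Prod>j\<in>{..<\<kappa>} - {0}. u j (c ! j))"
      unfolding u'_def by (intro prod.cong) auto
    also have "u' 0 (c ! 0) * (\<Prod>j\<in>{..<\<kappa>} - {0}. u j (c ! j)) = - (u 0 (c ! 0) * (\<Prod>j\<in>{..<\<kappa>} - {0}. u j (c ! j)))"
      unfolding u'_def by simp
    also have "u 0 (c ! 0) * (\<Prod>j\<in>{..<\<kappa>} - {0}. u j (c ! j)) = (\<Prod>j<\<kappa>. u j (c ! j))"
      by (rule prod_lessThan_remove[OF k0, symmetric])
    finally show "- y c = (\<Prod>j<\<kappa>. u' j (c ! j))" unfolding yu by simp
  qed
  moreover have "\<forall>j<\<kappa>. sqn {..<n} (u' j) = 1" using un unfolding u'_def sqn_def by auto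
  ultimately show ?thesis unfolding S1_def by blast
qed

lemma rip_S2_pair:
  fixes M :: "nat \<Rightarrow> nat list \<Rightarrow> real" and \<kappa> n m :: nat
  defines "C \<equiv> tidx \<kappa> {..<n}"
  assumes rip: "rip C {..<m} (lin_apply M C) \<epsilon> (S12 \<kappa> n)"
    and x: "x \<in> S1 \<kappa> n" and y: "y \<in> S1 \<kappa> n" and xy: "inner_on C x y = 0"
  shows "2 * (1 - \<epsilon>) \<le> sqn {..<m} (\<lambda>l. lin_apply M C x l + lin_apply M C y l) \<and>
         sqn {..<m} (\<lambda>l. lin_apply M C x l + lin_apply M C y l) \<le> 2 * (1 + \<epsilon>)"
proof -
  have s2: "sqn C (\<lambda>c. x c + y c) = 2"
    using sqn_add_scaled[of C x 1 y] S1_sqn[OF x] S1_sqn[OF y] xy unfolding C_def by simp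
  define sv where "sv = (\<lambda>c. (x c + y c) / sqrt (sqn C (\<lambda>c. x c + y c)))"
  have "sv \<in> S2 \<kappa> n" unfolding S2_def sv_def C_def using x y xy C_def by blast
  then have svS: "sv \<in> S12 \<kappa> n" unfolding S12_def by simp
  have ssv: "sqn C sv = 1" unfolding sv_def sqn_divide s2 by simp
  have Lsv: "lin_apply M C sv = (\<lambda>l. (lin_apply M C x l + lin_apply M C y l) / sqrt 2)"
    unfolding sv_def s2 using lin_apply_divide[of M C "\<lambda>c. x c + y c"] lin_apply_add_scaled[of M C x 1 y] by auto
  have "sqn {..<m} (lin_apply M C sv) = sqn {..<m} (\<lambda>l. lin_apply M C x l + lin_apply M C y l) / 2"
    unfolding Lsv sqn_divide by simp
  moreover have "(1 - \<epsilon>) * sqn C sv \<le> sqn {..<m} (lin_apply M C sv) \<and> sqn {..<m} (lin_apply M C sv) \<le> (1 + \<epsilon>) * sqn C sv"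
    using rip svS unfolding rip_def by blast
  ultimately show ?thesis using ssv by simp
qed

(* Polarisation: (x + y) / sqrt 2 and (x - y) / sqrt 2 lie in S_2. *)
lemma rip_inner_S1:
  fixes M :: "nat \<Rightarrow> nat list \<Rightarrow> real" and \<kappa> n m :: nat
  defines "C \<equiv> tidx \<kappa> {..<n}"
  assumes rip: "rip C {..<m} (lin_apply M C) \<epsilon> (S12 \<kappa> n)" and k: "\<kappa> \<ge> 1"
    and x: "x \<in> S1 \<kappa> n" and y: "y \<in> S1 \<kappa> n" and xy: "inner_on C x y = 0"
  shows "\<bar>inner_on {..<m} (lin_apply M C x) (lin_apply M C y)\<bar> \<le> \<epsilon>"
proof -
  have ny: "(\<lambda>c. - y c) \<in> S1 \<kappa> n" by (rule S1_uminus[OF k y])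
  have xny: "inner_on C x (\<lambda>c. - y c) = 0" using xy unfolding inner_on_def by (simp add: sum_negf)
  let ?A = "lin_apply M C x" and ?B = "lin_apply M C y"
  have p1: "2 * (1 - \<epsilon>) \<le> sqn {..<m} (\<lambda>l. ?A l + ?B l) \<and> sqn {..<m} (\<lambda>l. ?A l + ?B l) \<le> 2 * (1 + \<epsilon>)"
    using rip_S2_pair[of \<kappa> n m M \<epsilon> x y] rip x y xy unfolding C_def by blast
  have p2': "2 * (1 - \<epsilon>) \<le> sqn {..<m} (\<lambda>l. ?A l + lin_apply M C (\<lambda>c. - y c) l) \<and>
      sqn {..<m} (\<lambda>l. ?A l + lin_apply M C (\<lambda>c. - y c) l) \<le> 2 * (1 + \<epsilon>)"
    using rip_S2_pair[of \<kappa> n m M \<epsilon> x "\<lambda>c. - y c"] rip x ny xny unfolding C_def by blast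
  have p2: "2 * (1 - \<epsilon>) \<le> sqn {..<m} (\<lambda>l. ?A l + (-1) * ?B l) \<and> sqn {..<m} (\<lambda>l. ?A l + (-1) * ?B l) \<le> 2 * (1 + \<epsilon>)"
    using p2' by (simp add: lin_apply_uminus)
  have e1: "sqn {..<m} (\<lambda>l. ?A l + ?B l) = sqn {..<m} ?A + 2 * inner_on {..<m} ?A ?B + sqn {..<m} ?B"
    using sqn_add_scaled[of "{..<m}" ?A 1 ?B] by simp
  have e2: "sqn {..<m} (\<lambda>l. ?A l + (-1) * ?B l) = sqn {..<m} ?A - 2 * inner_on {..<m} ?A ?B + sqn {..<m} ?B"
    using sqn_add_scaled[of "{..<m}" ?A "-1" ?B] by simp
  show ?thesis using p1 p2 e1 e2 by (simp add: abs_le_iff)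
qed

lemma rip_sqn_S1:
  fixes M :: "nat \<Rightarrow> nat list \<Rightarrow> real" and \<kappa> n m :: nat
  defines "C \<equiv> tidx \<kappa> {..<n}"
  assumes rip: "rip C {..<m} (lin_apply M C) \<epsilon> (S12 \<kappa> n)" and x: "x \<in> S1 \<kappa> n"
  shows "\<bar>sqn {..<m} (lin_apply M C x) - 1\<bar> \<le> \<epsilon>"
proof -
  have "x \<in> S12 \<kappa> n" using x unfolding S12_def by simp
  then have "(1 - \<epsilon>) * sqn C x \<le> sqn {..<m} (lin_apply M C x) \<and> sqn {..<m} (lin_apply M C x) \<le> (1 + \<epsilon>) * sqn C x"
    using rip unfolding rip_def by blast
  then show ?thesis using S1_sqn[OF x] unfolding C_def by (simp add: abs_le_iff)
qed

lemma rip_S12_eps_nonneg: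
  assumes n: "n \<ge> 1" and rip: "rip (tidx \<kappa> {..<n}) J L \<epsilon> (S12 \<kappa> n)"
  shows "0 \<le> \<epsilon>"
proof -
  define u :: "nat \<Rightarrow> nat \<Rightarrow> real" where "u = (\<lambda>j t. if t = 0 then 1 else 0)"
  have "sqn {..<n} (u j) = 1" for j
  proof -
    have "sqn {..<n} (u j) = (\<Sum>t<n. if t = 0 then 1 else 0)"
      unfolding sqn_def u_def by (intro sum.cong) auto
    then show ?thesis using n by simp
  qed
  then have x: "(\<lambda>c. \<Prod>j<\<kappa>. u j (c ! j)) \<in> S1 \<kappa> n" unfolding S1_def by auto
  then have "(\<lambda>c. \<Prod>j<\<kappa>. u j (c ! j)) \<in> S12 \<kappa> n" unfolding S12_def by simp
  then have "(1 - \<epsilon>) * 1 \<le> (1 + \<epsilon>) * 1"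
    using rip S1_sqn[OF x] unfolding rip_def by fastforce
  then show ?thesis by simp
qed

lemma rip_lin_apply_bound:
  assumes rip: "rip I J (lin_apply M I) \<delta> S" and I: "finite I"
    and S: "sqn I Y \<noteq> 0 \<Longrightarrow> (\<lambda>i. Y i / sqrt (sqn I Y)) \<in> S"
  shows "(1 - \<delta>) * sqn I Y \<le> sqn J (lin_apply M I Y) \<and> sqn J (lin_apply M I Y) \<le> (1 + \<delta>) * sqn I Y"
proof (cases "sqn I Y = 0")
  case True
  then have "lin_apply M I Y = (\<lambda>_. 0)"
    using sqn_eq_0D[OF I True] unfolding lin_apply_def by (intro ext sum.neutral) auto
  then show ?thesis using True by (simp add: sqn_def)
next
  case False
  let ?Yh = "\<lambda>i. Y i / sqrt (sqn I Y)"
  have pos: "0 < sqn I Y" using False sqn_nonneg[of I Y] by linarith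
  have "lin_apply M I ?Yh = (\<lambda>l. lin_apply M I Y l / sqrt (sqn I Y))"
    by (intro ext lin_apply_divide)
  then have eq: "sqn J (lin_apply M I Y) = sqn J (lin_apply M I ?Yh) * sqn I Y"
    using pos by (simp add: sqn_divide)
  have "1 - \<delta> \<le> sqn J (lin_apply M I ?Yh)" "sqn J (lin_apply M I ?Yh) \<le> 1 + \<delta>"
    using rip S[OF False] sqn_normalize[OF False] unfolding rip_def by auto
  then show ?thesis unfolding eq using pos by (auto intro: mult_right_mono)
qed

lemma rip_block_kron_inner:
  fixes q :: "nat \<Rightarrow> nat \<Rightarrow> nat \<Rightarrow> real" and M :: "nat \<Rightarrow> nat list \<Rightarrow> real" and \<kappa> n :: nat
  defines "C \<equiv> tidx \<kappa> {..<n}"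
  assumes rip: "rip C {..<m} (lin_apply M C) \<epsilon> (S12 \<kappa> n)" and k: "\<kappa> \<ge> 1"
    and q: "\<forall>u<\<kappa>. orthonormal_or_zero n r (q (i * \<kappa> + u))"
    and a: "a \<in> tidx \<kappa> {..<r}" and a': "a' \<in> tidx \<kappa> {..<r}"
    and unit: "\<forall>u<\<kappa>. sqn {..<n} (q (i * \<kappa> + u) (a ! u)) = 1 \<and> sqn {..<n} (q (i * \<kappa> + u) (a' ! u)) = 1"
  shows "\<bar>inner_on {..<m} (lin_apply M C (block_kron \<kappa> q i a)) (lin_apply M C (block_kron \<kappa> q i a')) -
           (if a = a' then 1 else 0)\<bar> \<le> \<epsilon>"
proof -
  have S1: "block_kron \<kappa> q i b \<in> S1 \<kappa> n" if "\<forall>u<\<kappa>. sqn {..<n} (q (i * \<kappa> + u) (b ! u)) = 1" for b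
    unfolding S1_def block_kron_def
    by (intro CollectI exI[of _ "\<lambda>u. q (i * \<kappa> + u) (b ! u)"]) (use that in simp)
  show ?thesis
  proof (cases "a = a'")
    case True
    then show ?thesis
      using rip_sqn_S1[OF rip[unfolded C_def] S1] unit by (simp add: inner_on_self C_def)
  next
    case False
    then obtain u where u: "u < \<kappa>" "a ! u \<noteq> a' ! u" using tidx_eq_iff_nth[OF a a'] by auto
    have "inner_on C (block_kron \<kappa> q i a) (block_kron \<kappa> q i a') =
        (\<Prod>u<\<kappa>. inner_on {..<n} (q (i * \<kappa> + u) (a ! u)) (q (i * \<kappa> + u) (a' ! u)))"
      unfolding C_def block_kron_def by (rule kron_inner) simp
    also have "\<dots> = 0"
      using u q orthonormal_or_zero_inner[of n r "q (i * \<kappa> + u)" "a ! u" "a' ! u"] a a'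
      by (intro prod_zero) (auto simp: tidx_iff_nth)
    finally show ?thesis
      using rip_inner_S1[OF rip[unfolded C_def] k S1 S1] unit False by (simp add: C_def)
  qed
qed

section \<open>The two-stage estimate\<close>

lemma gram_block_kron_perturbation:
  fixes A :: "nat \<Rightarrow> nat \<Rightarrow> nat list \<Rightarrow> real" and q :: "nat \<Rightarrow> nat \<Rightarrow> nat \<Rightarrow> real"
  assumes k: "\<kappa> \<ge> 1" and e0: "0 \<le> \<epsilon>"
    and ripA: "\<forall>i<d'. rip (tidx \<kappa> {..<n}) {..<m} (lin_apply (A i) (tidx \<kappa> {..<n})) \<epsilon> (S12 \<kappa> n)"
    and q: "\<forall>t<d' * \<kappa>. orthonormal_or_zero n r (q t)"
    and kss: "kss \<in> tidx d' (tidx \<kappa> {..<r})" and kss': "kss' \<in> tidx d' (tidx \<kappa> {..<r})"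
    and unit: "\<forall>i<d'. \<forall>u<\<kappa>. sqn {..<n} (q (i * \<kappa> + u) (kss ! i ! u)) = 1 \<and>
                              sqn {..<n} (q (i * \<kappa> + u) (kss' ! i ! u)) = 1"
  shows "\<bar>(\<Prod>i<d'. inner_on {..<m} (lin_apply (A i) (tidx \<kappa> {..<n}) (block_kron \<kappa> q i (kss ! i)))
                                   (lin_apply (A i) (tidx \<kappa> {..<n}) (block_kron \<kappa> q i (kss' ! i)))) -
          (\<Prod>i<d'. if kss' ! i = kss ! i then 1 else 0)\<bar> \<le> (1 + \<epsilon>) ^ d' - 1"
proof -
  have "\<bar>inner_on {..<m} (lin_apply (A i) (tidx \<kappa> {..<n}) (block_kron \<kappa> q i (kss ! i)))
      (lin_apply (A i) (tidx \<kappa> {..<n}) (block_kron \<kappa> q i (kss' ! i))) -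
      (if kss' ! i = kss ! i then 1 else 0)\<bar> \<le> \<epsilon>" if i: "i < d'" for i
  proof -
    have "kss ! i \<in> tidx \<kappa> {..<r}" "kss' ! i \<in> tidx \<kappa> {..<r}"
      using kss kss' i by (simp_all add: tidx_iff_nth)
    moreover have "\<forall>u<\<kappa>. orthonormal_or_zero n r (q (i * \<kappa> + u))"
      using q block_index_less[OF i] by blast
    ultimately show ?thesis
      using rip_block_kron_inner[OF ripA[rule_format, OF i] k] unit i
      by (simp add: eq_commute[of "kss' ! i"])
  qed
  then show ?thesis using abs_prod_diff_le[of "{..<d'}" _ _ \<epsilon>] e0 by simp
qed

lemma block_factors_unit:
  assumes q: "\<forall>t<d' * \<kappa>. orthonormal_or_zero n r (q t)"
    and G0: "\<forall>ks. (\<exists>t<d' * \<kappa>. sqn {..<n} (q t (ks ! t)) = 0) \<longrightarrow> G ks = 0"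
    and kss: "kss \<in> tidx d' (tidx \<kappa> {..<r})" and G: "G (concat kss) \<noteq> 0"
  shows "\<forall>i<d'. \<forall>u<\<kappa>. sqn {..<n} (q (i * \<kappa> + u) (kss ! i ! u)) = 1"
proof (intro allI impI)
  fix i u assume i: "i < d'" and u: "u < \<kappa>"
  have "sqn {..<n} (q (i * \<kappa> + u) (concat kss ! (i * \<kappa> + u))) \<noteq> 0"
    using G0 G block_index_less[OF i u] by blast
  moreover have "kss ! i ! u < r" using kss i u by (simp add: tidx_iff_nth)
  ultimately show "sqn {..<n} (q (i * \<kappa> + u) (kss ! i ! u)) = 1"
    using q block_index_less[OF i u] concat_nth[OF kss i u] unfolding orthonormal_or_zero_def by auto
qed

lemma sqn_multi_mode_prod_reshape_perturbation:
  fixes A :: "nat \<Rightarrow> nat \<Rightarrow> nat list \<Rightarrow> real"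
  assumes k: "\<kappa> \<ge> 1" and X: "hosvd_rank_le (d' * \<kappa>) n r X"
    and e0: "0 \<le> \<epsilon>" and de: "real d' * \<epsilon> \<le> 1"
    and ripA: "\<forall>i<d'. rip (tidx \<kappa> {..<n}) {..<m} (lin_apply (A i) (tidx \<kappa> {..<n})) \<epsilon> (S12 \<kappa> n)"
  shows "\<bar>sqn (tidx d' {..<m}) (multi_mode_prod d' (tidx \<kappa> {..<n}) A (reshape X)) -
            sqn (tidx (d' * \<kappa>) {..<n}) X\<bar>
         \<le> 2 * real d' * \<epsilon> * real r ^ (d' * \<kappa>) * sqn (tidx (d' * \<kappa>) {..<n}) X"
proof -
  let ?C = "tidx \<kappa> {..<n}" and ?K = "tidx d' (tidx \<kappa> {..<r})"
  let ?SX = "sqn (tidx (d' * \<kappa>) {..<n}) X"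
  obtain q G where q: "\<forall>t<d' * \<kappa>. orthonormal_or_zero n r (q t)"
    and GX: "sqn (tidx (d' * \<kappa>) {..<r}) G = ?SX"
    and G0: "\<forall>ks. (\<exists>t<d' * \<kappa>. sqn {..<n} (q t (ks ! t)) = 0) \<longrightarrow> G ks = 0"
    and rep: "\<forall>l\<in>tidx (d' * \<kappa>) {..<n}.
      X l = (\<Sum>ks\<in>tidx (d' * \<kappa>) {..<r}. G ks * (\<Prod>t<d' * \<kappa>. q t (ks ! t) (l ! t)))"
    using hosvd_rank_le_orthonormal_expansion[OF X] by blast
  define g where "g kss = G (concat kss)" for kss :: "nat list list"
  define z where "z i a = lin_apply (A i) ?C (block_kron \<kappa> q i a)" for i a
  define P where "P kss kss' = (\<Prod>i<d'. inner_on {..<m} (z i (kss ! i)) (z i (kss' ! i)))"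
    for kss kss' :: "nat list list"
  define Q where "Q kss kss' = (\<Prod>i<d'. if kss' ! i = kss ! i then 1 else (0::real))"
    for kss kss' :: "nat list list"
  have "multi_mode_prod d' ?C A (reshape X) = (\<lambda>ls. \<Sum>kss\<in>?K. g kss * (\<Prod>i<d'. z i (kss ! i) (ls ! i)))"
    using multi_mode_prod_reshape_expansion[OF k _ rep] unfolding g_def z_def by (intro ext) simp
  then have sqnY: "sqn (tidx d' {..<m}) (multi_mode_prod d' ?C A (reshape X)) =
      (\<Sum>kss\<in>?K. \<Sum>kss'\<in>?K. g kss * g kss' * P kss kss')"
    unfolding P_def by (simp add: sqn_outer_sum)
  have sum_g: "(\<Sum>kss\<in>?K. (g kss)\<^sup>2) = ?SX"
    using GX sum.reindex_bij_betw[OF concat_bij[OF k, of d' "{..<r}"], of "\<lambda>ks. (G ks)\<^sup>2"]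
    unfolding sqn_def g_def by simp
  have sqnX: "?SX = (\<Sum>kss\<in>?K. \<Sum>kss'\<in>?K. g kss * g kss' * Q kss kss')"
    unfolding sum_g[symmetric] Q_def by (rule sum_squares_eq_delta_form) (simp add: finite_tidx)
  have unit: "\<forall>i<d'. \<forall>u<\<kappa>. sqn {..<n} (q (i * \<kappa> + u) (kss ! i ! u)) = 1"
    if "kss \<in> ?K" "g kss \<noteq> 0" for kss
    using block_factors_unit[OF q G0] that unfolding g_def by blast
  have "\<bar>sqn (tidx d' {..<m}) (multi_mode_prod d' ?C A (reshape X)) - ?SX\<bar> \<le>
      ((1 + \<epsilon>) ^ d' - 1) * card ?K * (\<Sum>kss\<in>?K. (g kss)\<^sup>2)"
    unfolding sqnY sqnX
  proof (rule quadratic_form_perturbation)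
    fix kss kss' assume "kss \<in> ?K" "kss' \<in> ?K" "g kss \<noteq> 0" "g kss' \<noteq> 0"
    then show "\<bar>P kss kss' - Q kss kss'\<bar> \<le> (1 + \<epsilon>) ^ d' - 1"
      unfolding P_def Q_def z_def using unit by (intro gram_block_kron_perturbation[OF k e0 ripA q]) auto
  qed (use e0 in \<open>simp_all add: finite_tidx\<close>)
  also have "\<dots> = ((1 + \<epsilon>) ^ d' - 1) * real (r ^ (d' * \<kappa>)) * ?SX"
    by (simp add: sum_g card_tidx finite_tidx power_mult mult.commute)
  also have "\<dots> \<le> (2 * real d' * \<epsilon>) * real (r ^ (d' * \<kappa>)) * ?SX"
    using one_plus_power_le[OF e0 de] sqn_nonneg[of _ X] by (intro mult_right_mono) auto
  finally show ?thesis by simp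
qed

lemma nearly_orth_if_fibers_in_span:
  fixes Y :: "nat list \<Rightarrow> real" and v :: "nat \<Rightarrow> 'k \<Rightarrow> nat \<Rightarrow> real"
  assumes p: "0 < p" and K: "finite K" and Y: "fibers_in_span D p K v Y"
    and unit: "sqn (tidx D {..<p}) Y = 1" and R: "1 \<le> R" and \<mu>: "0 \<le> \<mu>" and \<theta>: "\<theta> \<le> 1"
  shows "Y \<in> nearly_orth D p (card K) R \<mu> \<theta>"
proof -
  obtain W where W: "\<forall>i<D. orthonormal_or_zero p (card K) (W i)"
    and fib: "fibers_in_span D p {..<card K} W Y"
    and orth: "all_orthogonal D (card K) (multi_mode_prod D {..<p} W Y)"
    using hosvd[OF p K Y] by blast
  let ?C = "multi_mode_prod D {..<p} W Y"
  have "sqn (tidx D {..<card K}) ?C = 1"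
    using parseval[OF W fib, of Y] unit by (simp add: inner_on_self)
  moreover have "sqrt (sqn {..<p} (W i k)) \<le> R" if "i < D" "k < card K" for i k
  proof -
    have "sqn {..<p} (W i k) = 0 \<or> sqn {..<p} (W i k) = 1"
      using W that unfolding orthonormal_or_zero_def by blast
    then show ?thesis using R by auto
  qed
  moreover have "\<bar>inner_on {..<p} (W i k) (W i k')\<bar> \<le> \<mu>" if "i < D" "k < card K" "k' < card K" "k \<noteq> k'"
    for i k k'
    using W that \<mu> unfolding orthonormal_or_zero_def by auto
  ultimately show ?thesis
    unfolding nearly_orth_def
    using orthonormal_expansion[OF W fib] orth unit \<theta> unfolding all_orthogonal_def
    by (intro CollectI exI[of _ ?C] exI[of _ W]) auto
qed

lemma rip_nearly_orth_bound:
  fixes Y :: "nat list \<Rightarrow> real" and v :: "nat \<Rightarrow> 'k \<Rightarrow> nat \<Rightarrow> real"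
  assumes rip: "rip (tidx D {..<p}) J (lin_apply M (tidx D {..<p})) \<delta> (nearly_orth D p (card K) R \<mu> \<theta>)"
    and D: "1 \<le> D" and K: "finite K" and Y: "fibers_in_span D p K v Y"
    and R: "1 \<le> R" and \<mu>: "0 \<le> \<mu>" and \<theta>: "\<theta> \<le> 1"
  shows "(1 - \<delta>) * sqn (tidx D {..<p}) Y \<le> sqn J (lin_apply M (tidx D {..<p}) Y) \<and>
         sqn J (lin_apply M (tidx D {..<p}) Y) \<le> (1 + \<delta>) * sqn (tidx D {..<p}) Y"
proof (rule rip_lin_apply_bound[OF rip finite_tidx])
  assume Y0: "sqn (tidx D {..<p}) Y \<noteq> 0"
  have "0 < p"
  proof (rule ccontr)
    assume "\<not> 0 < p"
    then have "tidx D {..<p} = {}" using D by (auto simp: tidx_def)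
    then show False using Y0 by (simp add: sqn_def)
  qed
  then show "(\<lambda>i. Y i / sqrt (sqn (tidx D {..<p}) Y)) \<in> nearly_orth D p (card K) R \<mu> \<theta>"
    using K fibers_in_span_divide[OF Y]
    by (rule nearly_orth_if_fibers_in_span) (use Y0 R \<mu> \<theta> in \<open>simp_all add: sqn_normalize\<close>)
qed simp

lemma multi_mode_prod_reshape_fibers_in_span:
  fixes A :: "nat \<Rightarrow> nat \<Rightarrow> nat list \<Rightarrow> real"
  assumes k: "\<kappa> \<ge> 1" and X: "hosvd_rank_le (d' * \<kappa>) n r X"
  shows "\<exists>v. fibers_in_span d' m (tidx \<kappa> {..<r}) v (multi_mode_prod d' (tidx \<kappa> {..<n}) A (reshape X))"
proof -
  obtain b G where rep: "\<forall>l\<in>tidx (d' * \<kappa>) {..<n}.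
      X l = (\<Sum>ks\<in>tidx (d' * \<kappa>) {..<r}. G ks * (\<Prod>t<d' * \<kappa>. b t (ks ! t) (l ! t)))"
    using X unfolding hosvd_rank_le_def by blast
  have "fibers_in_span d' m (tidx \<kappa> {..<r})
      (\<lambda>i a. lin_apply (A i) (tidx \<kappa> {..<n}) (block_kron \<kappa> b i a)) (multi_mode_prod d' (tidx \<kappa> {..<n}) A (reshape X))"
    by (rule fibers_in_span_outer_sum[where H = "\<lambda>kss. G (concat kss)"])
      (simp_all add: finite_tidx multi_mode_prod_reshape_expansion[OF k _ rep])
  then show ?thesis by blast
qed

lemma relative_error_compose:
  fixes \<delta> SX SY S2 :: real
  assumes d0: "0 \<le> \<delta>" and d1: "\<delta> < 1" and sx: "0 \<le> SX"
    and b: "\<bar>SY - SX\<bar> \<le> \<delta> / 6 * SX"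
    and lo: "(1 - \<delta> / 3) * SY \<le> S2" and hi: "S2 \<le> (1 + \<delta> / 3) * SY"
  shows "(1 - \<delta>) * SX \<le> S2 \<and> S2 \<le> (1 + \<delta>) * SX"
proof
  have b1: "SY - SX \<le> \<delta> / 6 * SX" and b2: "SX - SY \<le> \<delta> / 6 * SX" using b abs_le_iff[of "SY - SX" "\<delta> / 6 * SX"] by linarith+
  have e1: "(1 + \<delta> / 6) * SX = SX + \<delta> / 6 * SX" by (simp add: distrib_right)
  have e2: "(1 - \<delta> / 6) * SX = SX - \<delta> / 6 * SX" by (simp add: left_diff_distrib)
  have up: "SY \<le> (1 + \<delta> / 6) * SX" unfolding e1 using b1 by linarith
  have dn: "(1 - \<delta> / 6) * SX \<le> SY" unfolding e2 using b2 by linarith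
  have dd: "\<delta> * \<delta> \<le> \<delta>" using d0 d1 by (simp add: mult_left_le)
  have "(1 - \<delta> / 3) * ((1 - \<delta> / 6) * SX) \<le> (1 - \<delta> / 3) * SY"
    using dn d1 by (intro mult_left_mono) auto
  moreover have "(1 - \<delta>) * SX \<le> (1 - \<delta> / 3) * ((1 - \<delta> / 6) * SX)"
  proof -
    have "(1 - \<delta>) \<le> (1 - \<delta> / 3) * (1 - \<delta> / 6)" using dd d0 by (simp add: algebra_simps)
    then show ?thesis using sx by (simp add: mult_right_mono mult.assoc[symmetric])
  qed
  ultimately show "(1 - \<delta>) * SX \<le> S2" using lo by linarith
  have "(1 + \<delta> / 3) * SY \<le> (1 + \<delta> / 3) * ((1 + \<delta> / 6) * SX)"
    using up d0 by (intro mult_left_mono) auto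
  moreover have "(1 + \<delta> / 3) * ((1 + \<delta> / 6) * SX) \<le> (1 + \<delta>) * SX"
  proof -
    have "(1 + \<delta> / 3) * (1 + \<delta> / 6) \<le> 1 + \<delta>" using dd d0 by (simp add: algebra_simps)
    then show ?thesis using sx by (simp add: mult_right_mono mult.assoc[symmetric])
  qed
  ultimately show "S2 \<le> (1 + \<delta>) * SX" using hi by linarith
qed

theorem theorem2:
  fixes d n \<kappa> r m m2 :: nat and \<epsilon> :: real
    and A :: "nat \<Rightarrow> nat \<Rightarrow> nat list \<Rightarrow> real"
    and A2 :: "nat \<Rightarrow> nat list \<Rightarrow> real"
  defines "d' \<equiv> d div \<kappa>"
  defines "\<delta> \<equiv> 12 * real d' * real r ^ d * \<epsilon>"
  assumes "d \<ge> 1" and "n \<ge> 1" and "\<kappa> \<ge> 1" and "\<kappa> dvd d" and "r \<ge> 2"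
    and "\<delta> < 1"
    and "\<forall>i<d'. rip (tidx \<kappa> {..<n}) {..<m} (lin_apply (A i) (tidx \<kappa> {..<n})) \<epsilon> (S12 \<kappa> n)"
    and "rip (tidx d' {..<m}) {..<m2} (lin_apply A2 (tidx d' {..<m})) (\<delta> / 3)
           (nearly_orth d' m (r ^ \<kappa>) (1 + \<epsilon>) \<epsilon> (1 - \<delta> / 3))"
  shows "\<forall>X. hosvd_rank_le d n r X \<longrightarrow>
           (1 - \<delta>) * sqn (tidx d {..<n}) X \<le> sqn {..<m2} (A2nd \<kappa> d' n m A A2 X) \<and>
           sqn {..<m2} (A2nd \<kappa> d' n m A A2 X) \<le> (1 + \<delta>) * sqn (tidx d {..<n}) X"
proof (intro allI impI)
  fix X assume X: "hosvd_rank_le d n r X"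
  let ?Y = "multi_mode_prod d' (tidx \<kappa> {..<n}) A (reshape X)"
  have d: "d = d' * \<kappa>" using \<open>\<kappa> dvd d\<close> unfolding d'_def by simp
  then have d': "1 \<le> d'" using \<open>d \<ge> 1\<close> by (cases d') auto
  have \<epsilon>0: "0 \<le> \<epsilon>"
    by (rule rip_S12_eps_nonneg[OF \<open>n \<ge> 1\<close>, of \<kappa> "{..<m}" "lin_apply (A 0) (tidx \<kappa> {..<n})"])
      (use assms(9) d' in simp)
  have "12 * (real d' * \<epsilon>) * 1 \<le> \<delta>"
    unfolding \<delta>_def using \<epsilon>0 \<open>r \<ge> 2\<close> by (simp add: mult_ac one_le_power mult_left_mono)
  moreover have "0 \<le> real d' * \<epsilon>" using \<epsilon>0 by simp
  ultimately have d'\<epsilon>: "real d' * \<epsilon> \<le> 1" and \<delta>0: "0 \<le> \<delta>" using \<open>\<delta> < 1\<close> by linarith+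
  have Y_close: "\<bar>sqn (tidx d' {..<m}) ?Y - sqn (tidx d {..<n}) X\<bar> \<le> \<delta> / 6 * sqn (tidx d {..<n}) X"
    using sqn_multi_mode_prod_reshape_perturbation[OF \<open>\<kappa> \<ge> 1\<close> X[unfolded d] \<epsilon>0 d'\<epsilon> assms(9)]
    unfolding d[symmetric] \<delta>_def by (simp add: mult_ac)
  obtain v where "fibers_in_span d' m (tidx \<kappa> {..<r}) v ?Y"
    using multi_mode_prod_reshape_fibers_in_span[OF \<open>\<kappa> \<ge> 1\<close> X[unfolded d]] by blast
  then have "(1 - \<delta> / 3) * sqn (tidx d' {..<m}) ?Y \<le> sqn {..<m2} (A2nd \<kappa> d' n m A A2 X) \<and>
      sqn {..<m2} (A2nd \<kappa> d' n m A A2 X) \<le> (1 + \<delta> / 3) * sqn (tidx d' {..<m}) ?Y"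
    unfolding A2nd_def using assms(10) d' \<epsilon>0 \<delta>0
    by (intro rip_nearly_orth_bound) (auto simp: card_tidx finite_tidx)
  then show "(1 - \<delta>) * sqn (tidx d {..<n}) X \<le> sqn {..<m2} (A2nd \<kappa> d' n m A A2 X) \<and>
      sqn {..<m2} (A2nd \<kappa> d' n m A A2 X) \<le> (1 + \<delta>) * sqn (tidx d {..<n}) X"
    using relative_error_compose[OF \<delta>0 \<open>\<delta> < 1\<close> sqn_nonneg Y_close] by blast
qed

end
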